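(* Let $A=\langle a_1,a_2\mid \Pi(a_1,a_2,m_A)=\Pi(a_2,a_1,m_A)\rangle$ be a dihedral Artin group with $m_A<\infty$. Let $k_1,k_2\in\mathbb{Z}$ with $k_2\neq0$. Then the centralizer of $\delta_A^{k_1}a_1^{k_2}$ in $A$ is the free abelian group generated by $\delta_A$ and $a_1$.
   Context: $\Pi(s,t,m)$ denotes the alternating word $sts\cdots$ of length $m$; $m_A\ge 2$ is an integer. $\Delta_A=\Pi(a_1,a_2,m_A)=\Pi(a_2,a_1,m_A)$ is the Garside element, and $\delta_A=\Delta_A^2$ if $m_A$ is odd, $\delta_A=\Delta_A$ if $m_A$ is even. *)

theory Defs
  imports Main
begin

text \<open>A letter is (generator, sign), sign True = positive
  letter, sign False = inverse letter.  Group elements are words modulo the congruence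
  artin_eq m generated by free cancellation and the braid relation.\<close>

type_synonym letter = "bool \<times> bool"
type_synonym word = "letter list"

definition gen :: "bool \<Rightarrow> word" where
  "gen s = [(s, True)]"

definition a1 :: word where "a1 = gen False"
definition a2 :: word where "a2 = gen True"

definition inv_letter :: "letter \<Rightarrow> letter" where
  "inv_letter x = (fst x, \<not> snd x)"

definition inv_word :: "word \<Rightarrow> word" where
  "inv_word w = rev (map inv_letter w)"

fun Pi :: "bool \<Rightarrow> bool \<Rightarrow> nat \<Rightarrow> word" where
  "Pi s t 0 = []"
| "Pi s t (Suc n) = (s, True) # Pi t s n"

inductive artin_eq :: "nat \<Rightarrow> word \<Rightarrow> word \<Rightarrow> bool" for m :: nat where
  refl: "artin_eq m w w"
| sym: "artin_eq m u v \<Longrightarrow> artin_eq m v u"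
| trans: "artin_eq m u v \<Longrightarrow> artin_eq m v w \<Longrightarrow> artin_eq m u w"
| cong: "artin_eq m u v \<Longrightarrow> artin_eq m (x @ u @ y) (x @ v @ y)"
| cancel: "artin_eq m [x, inv_letter x] []"
| braid: "artin_eq m (Pi False True m) (Pi True False m)"

definition Delta :: "nat \<Rightarrow> word" where
  "Delta m = Pi False True m"

definition delta :: "nat \<Rightarrow> word" where
  "delta m = (if odd m then Delta m @ Delta m else Delta m)"

definition word_pow :: "word \<Rightarrow> int \<Rightarrow> word" where
  "word_pow w k = (if 0 \<le> k then concat (replicate (nat k) w)
                   else concat (replicate (nat (- k)) (inv_word w)))"

definition centralizer_words :: "nat \<Rightarrow> word \<Rightarrow> word set" where
  "centralizer_words m g = {w. artin_eq m (w @ g) (g @ w)}"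

end

theory Submission
  imports Defs
begin

text \<open>Put \<open>x = a\<^sub>1a\<^sub>2\<close>, and \<open>y = \<Delta>\<close> for odd \<open>m\<close>, \<open>y = a\<^sub>1\<close> for even \<open>m\<close>. Modulo the
  central element \<open>\<delta>\<close> the group becomes the free product of a cyclic group of order \<open>q\<close> generated
  by \<open>x\<close> and a cyclic group of order \<open>p\<close> generated by \<open>y\<close> (\<open>q = m, p = 2\<close> for odd \<open>m\<close>;
  \<open>q = m/2, p = \<infinity>\<close> for even \<open>m\<close>). Hence every element has a unique normal form
  \<open>\<delta>\<^sup>N x\<^sup>f\<^sup>0 y\<^sup>e\<^sup>1 x\<^sup>f\<^sup>1 \<dots> y\<^sup>e\<^sup>k x\<^sup>f\<^sup>k\<close>. We obtain it from an action of words on such normal forms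
  that respects the defining relations, together with a map from normal forms back to words.

  If \<open>w\<close> commutes with \<open>a\<^sub>1\<^sup>K\<close>, either multiplying \<open>w\<close> by a power of \<open>a\<^sub>1\<close> on one side shortens
  its normal form, and we conclude by induction, or comparing the normal forms of \<open>w a\<^sub>1\<^sup>K\<close> and
  \<open>a\<^sub>1\<^sup>K w\<close> forces the syllables of \<open>w\<close> to be those of a power of \<open>a\<^sub>1\<close>. Uniqueness of the
  exponents in \<open>\<delta>\<^sup>i a\<^sub>1\<^sup>j\<close> is read off the normal forms as well.\<close>

declare artin_eq.refl [simp, intro]
declare artin_eq.trans [trans]

lemma inv_letter_inv_letter [simp]: "inv_letter (inv_letter x) = x"
  by (cases x) (simp add: inv_letter_def)

lemma inv_word_Nil [simp]: "inv_word [] = []"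
  and inv_word_Cons: "inv_word (x # w) = inv_word w @ [inv_letter x]"
  and inv_word_append [simp]: "inv_word (u @ v) = inv_word v @ inv_word u"
  and inv_word_inv_word [simp]: "inv_word (inv_word u) = u"
  by (simp_all add: inv_word_def rev_map[symmetric] map_map comp_def)

lemma inv_word_single [simp]: "inv_word [x] = [inv_letter x]"
  by (simp add: inv_word_def)

lemma artin_eq_append:
  assumes "artin_eq m u u'" and "artin_eq m v v'"
  shows "artin_eq m (u @ v) (u' @ v')"
proof -
  have "artin_eq m (u @ v) (u' @ v)" using artin_eq.cong[OF assms(1), of "[]" v] by simp
  also have "artin_eq m (\<dots>) (u' @ v')" using artin_eq.cong[OF assms(2), of u' "[]"] by simp
  finally show ?thesis .
qed

lemma artin_eq_append_left: "artin_eq m v v' \<Longrightarrow> artin_eq m (u @ v) (u @ v')"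
  and artin_eq_append_right: "artin_eq m u u' \<Longrightarrow> artin_eq m (u @ v) (u' @ v)"
  by (simp_all add: artin_eq_append)

lemma artin_eq_append_inv_word: "artin_eq m (u @ inv_word u) []"
proof (induction u)
  case (Cons x u)
  have "artin_eq m ([x] @ (u @ inv_word u) @ [inv_letter x]) ([x] @ [] @ [inv_letter x])"
    by (rule artin_eq.cong[OF Cons.IH])
  then show ?case using artin_eq.cancel[of m x] by (auto simp: inv_word_Cons intro: artin_eq.trans)
qed simp

lemma artin_eq_inv_word_append: "artin_eq m (inv_word u @ u) []"
  using artin_eq_append_inv_word[of m "inv_word u"] by simp

lemma artin_eq_cancel_inv_middle: "artin_eq m (u @ inv_word v @ v @ w) (u @ w)"
  using artin_eq_append_left[OF artin_eq_append_right[OF artin_eq_inv_word_append[of m v]], of u w]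
  by simp

lemma artin_eq_cancel_left:
  assumes "artin_eq m (x @ u) (x @ v)"
  shows "artin_eq m u v"
proof -
  have "artin_eq m u (inv_word x @ x @ u)"
    using artin_eq.sym[OF artin_eq_cancel_inv_middle[of m "[]" x u]] by simp
  also have "artin_eq m (inv_word x @ x @ u) (inv_word x @ x @ v)"
    using artin_eq_append_left[OF assms] by simp
  also have "artin_eq m (inv_word x @ x @ v) v"
    using artin_eq_cancel_inv_middle[of m "[]" x v] by simp
  finally show ?thesis .
qed

lemma artin_eq_inv_word:
  assumes "artin_eq m u v"
  shows "artin_eq m (inv_word u) (inv_word v)"
proof -
  have "artin_eq m (inv_word u) (inv_word u @ v @ inv_word v)"
    using artin_eq.sym[OF artin_eq_append_left[OF artin_eq_append_inv_word[of m v], of "inv_word u"]]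
    by simp
  also have "artin_eq m (inv_word u @ v @ inv_word v) (inv_word u @ u @ inv_word v)"
    using artin_eq_append_left[OF artin_eq_append_right[OF artin_eq.sym[OF assms]]] by simp
  also have "artin_eq m (inv_word u @ u @ inv_word v) (inv_word v)"
    using artin_eq_cancel_inv_middle[of m "[]" u "inv_word v"] by simp
  finally show ?thesis .
qed

lemma word_pow_0 [simp]: "word_pow w 0 = []"
  and word_pow_1 [simp]: "word_pow w 1 = w"
  and word_pow_of_nat [simp]: "word_pow w (int n) = concat (replicate n w)"
  and word_pow_minus_1 [simp]: "word_pow w (-1) = inv_word w"
  by (simp_all add: word_pow_def)

lemma concat_replicate_Suc: "concat (replicate (Suc n) w) = concat (replicate n w) @ w"
  by (induction n) auto

lemma concat_replicate_append_commute: "w @ concat (replicate n w) = concat (replicate n w) @ w"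
  using concat_replicate_Suc[of n w] by simp

lemma inv_word_concat_replicate: "inv_word (concat (replicate n w)) = concat (replicate n (inv_word w))"
  by (induction n) (simp_all add: concat_replicate_append_commute)

lemma inv_word_word_pow: "inv_word (word_pow w k) = word_pow w (-k)"
  by (cases "k < 0") (auto simp: word_pow_def inv_word_concat_replicate)

lemma word_pow_inv_word: "word_pow (inv_word w) k = word_pow w (-k)"
  by (simp add: word_pow_def)

lemma word_pow_append: "artin_eq m (word_pow w k @ w) (word_pow w (k + 1))"
proof (cases "k < 0")
  case True
  define n where "n = nat (- (k + 1))"
  have "nat (- k) = Suc n" using True by (simp add: n_def)
  then have "word_pow w k @ w = concat (replicate n (inv_word w)) @ inv_word w @ w"
    using True by (simp add: word_pow_def concat_replicate_append_commute)
  moreover have "word_pow w (k + 1) = concat (replicate n (inv_word w))"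
    using True by (auto simp: word_pow_def n_def)
  ultimately show ?thesis using artin_eq_cancel_inv_middle[of m _ w "[]"] by simp
next
  case False
  then have "nat (k + 1) = Suc (nat k)" by simp
  then show ?thesis using False by (simp add: word_pow_def concat_replicate_append_commute)
qed

lemma word_pow_append_inv_word: "artin_eq m (word_pow w k @ inv_word w) (word_pow w (k - 1))"
  using word_pow_append[of m "inv_word w" "- k"] by (simp add: word_pow_inv_word)

lemma word_pow_add: "artin_eq m (word_pow w i @ word_pow w j) (word_pow w (i + j))"
proof (induction j rule: int_induct[where k = 0])
  case (step1 j)
  have "artin_eq m (word_pow w i @ word_pow w (j + 1)) (word_pow w i @ word_pow w j @ w)"
    using artin_eq_append_left[OF artin_eq.sym[OF word_pow_append]] by simp
  also have "artin_eq m (\<dots>) (word_pow w (i + j) @ w)"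
    using artin_eq_append_right[OF step1.IH] by simp
  also have "artin_eq m (\<dots>) (word_pow w (i + (j + 1)))"
    using word_pow_append[of m w "i + j"] by (simp add: add.assoc)
  finally show ?case .
next
  case (step2 j)
  have "artin_eq m (word_pow w i @ word_pow w (j - 1)) (word_pow w i @ word_pow w j @ inv_word w)"
    using artin_eq_append_left[OF artin_eq.sym[OF word_pow_append_inv_word]] by simp
  also have "artin_eq m (\<dots>) (word_pow w (i + j) @ inv_word w)"
    using artin_eq_append_right[OF step2.IH] by simp
  also have "artin_eq m (\<dots>) (word_pow w (i + (j - 1)))"
    using word_pow_append_inv_word[of m w "i + j"] by (simp add: algebra_simps)
  finally show ?case .
qed simp

lemma append_word_pow: "artin_eq m (w @ word_pow w k) (word_pow w (k + 1))"
  using word_pow_add[of m w 1 k] by (simp add: add.commute)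

lemma inv_word_append_word_pow: "artin_eq m (inv_word w @ word_pow w k) (word_pow w (k - 1))"
  using word_pow_add[of m w "-1" k] by simp

definition commutes :: "nat \<Rightarrow> word \<Rightarrow> word \<Rightarrow> bool" where
  "commutes m u v \<longleftrightarrow> artin_eq m (u @ v) (v @ u)"

lemma commutes_sym: "commutes m u v \<Longrightarrow> commutes m v u"
  unfolding commutes_def by (rule artin_eq.sym)

lemma commutes_append_right:
  assumes "commutes m u v\<^sub>1" and "commutes m u v\<^sub>2"
  shows "commutes m u (v\<^sub>1 @ v\<^sub>2)"
proof -
  have "artin_eq m (u @ v\<^sub>1 @ v\<^sub>2) (v\<^sub>1 @ u @ v\<^sub>2)"
    using artin_eq_append_right[OF assms(1)[unfolded commutes_def]] by simp
  also have "artin_eq m (\<dots>) (v\<^sub>1 @ v\<^sub>2 @ u)"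
    using artin_eq_append_left[OF assms(2)[unfolded commutes_def]] by simp
  finally show ?thesis by (simp add: commutes_def)
qed

lemma commutes_append_left: "commutes m u\<^sub>1 v \<Longrightarrow> commutes m u\<^sub>2 v \<Longrightarrow> commutes m (u\<^sub>1 @ u\<^sub>2) v"
  by (metis commutes_append_right commutes_sym)

lemma commutes_inv_word:
  assumes "commutes m u v"
  shows "commutes m u (inv_word v)"
proof -
  have "artin_eq m (u @ inv_word v) (inv_word v @ v @ u @ inv_word v)"
    using artin_eq.sym[OF artin_eq_cancel_inv_middle[of m "[]" v "u @ inv_word v"]] by simp
  also have "artin_eq m (\<dots>) (inv_word v @ u @ v @ inv_word v)"
    using artin_eq_append_left[OF artin_eq_append_right[OF assms[unfolded commutes_def, THEN artin_eq.sym]],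
        of "inv_word v" "inv_word v"]
    by simp
  also have "artin_eq m (\<dots>) (inv_word v @ u)"
    using artin_eq_append_left[OF artin_eq_append_inv_word[of m v], of "inv_word v @ u"] by simp
  finally show ?thesis by (simp add: commutes_def)
qed

lemma commutes_word_pow:
  assumes "commutes m u v"
  shows "commutes m u (word_pow v k)"
proof -
  have "commutes m u (concat (replicate n v'))" if "commutes m u v'" for n v'
    using that by (induction n) (auto simp: commutes_def[of _ _ "[]"] intro!: commutes_append_right)
  then show ?thesis using assms commutes_inv_word[OF assms] by (simp add: word_pow_def)
qed

lemma commutes_artin_eq:
  assumes "artin_eq m w w'" and "commutes m w' g"
  shows "commutes m w g"
proof -
  have "artin_eq m (w @ g) (w' @ g)" by (rule artin_eq_append_right[OF assms(1)])
  also have "artin_eq m (\<dots>) (g @ w')" using assms(2) by (simp add: commutes_def)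
  also have "artin_eq m (\<dots>) (g @ w)" by (rule artin_eq_append_left[OF artin_eq.sym[OF assms(1)]])
  finally show ?thesis by (simp add: commutes_def)
qed

lemma Pi_snoc: "Pi s t (Suc n) = Pi s t n @ [(if even n then s else t, True)]"
  by (induction n arbitrary: s t) auto

lemma Pi_even: "Pi s t (2 * k) = concat (replicate k [(s, True), (t, True)])"
  by (induction k arbitrary: s t) auto

lemma Pi_odd: "Pi s t (2 * k + 1) = concat (replicate k [(s, True), (t, True)]) @ [(s, True)]"
  using Pi_snoc[of s t "2 * k"] by (simp add: Pi_even del: Pi.simps)

lemma letter_Delta: "artin_eq m ([(g, True)] @ Delta m) (Delta m @ [(g \<noteq> odd m, True)])"
proof (cases g)
  case True
  have "[(True, True)] @ Delta m = Pi True False m @ [(True \<noteq> odd m, True)]"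
    by (simp add: Delta_def Pi_snoc[of True False m, simplified])
  then show ?thesis
    using True artin_eq_append_right[OF artin_eq.sym[OF artin_eq.braid[of m]], of "[(True \<noteq> odd m, True)]"]
    by (simp add: Delta_def)
next
  case False
  have "artin_eq m ([(False, True)] @ Delta m) ([(False, True)] @ Pi True False m)"
    using artin_eq_append_left[OF artin_eq.braid[of m], of "[(False, True)]"] by (simp add: Delta_def)
  also have "[(False, True)] @ Pi True False m = Delta m @ [(False \<noteq> odd m, True)]"
    by (simp add: Delta_def Pi_snoc[of False True m, simplified])
  finally show ?thesis using False by simp
qed

lemma commutes_delta_positive_letter: "commutes m (delta m) [(g, True)]"
proof -
  have "artin_eq m ([(g, True)] @ delta m) (delta m @ [(g, True)])"
  proof (cases "odd m")
    case True
    have "artin_eq m ([(g, True)] @ Delta m @ Delta m) (Delta m @ [(\<not> g, True)] @ Delta m)"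
      using artin_eq_append_right[OF letter_Delta[of m g], of "Delta m"] True by simp
    also have "artin_eq m (\<dots>) (Delta m @ Delta m @ [(g, True)])"
      using artin_eq_append_left[OF letter_Delta[of m "\<not> g"], of "Delta m"] True by simp
    finally show ?thesis using True by (simp add: delta_def)
  next
    case False
    then show ?thesis using letter_Delta[of m g] by (simp add: delta_def)
  qed
  then show ?thesis unfolding commutes_def by (rule artin_eq.sym)
qed

lemma commutes_delta: "commutes m (delta m) w"
proof (induction w)
  case (Cons x w)
  obtain g s where x: "x = (g, s)" by fastforce
  have "commutes m (delta m) [x]"
  proof (cases s)
    case False
    have "commutes m (delta m) (inv_word [(g, True)])"
      by (rule commutes_inv_word[OF commutes_delta_positive_letter])
    then show ?thesis using x False by (simp add: inv_letter_def)
  qed (use x commutes_delta_positive_letter in simp)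
  then show ?case using commutes_append_right[OF _ Cons.IH, of "[x]"] by simp
qed (simp add: commutes_def)

lemma commutes_delta_pow: "commutes m (word_pow (delta m) k) w"
  using commutes_word_pow[OF commutes_sym[OF commutes_delta]] by (rule commutes_sym)

lemma artin_eq_move_delta_pow: "artin_eq m (u @ word_pow (delta m) N @ v) (word_pow (delta m) N @ u @ v)"
  using artin_eq_append_right[OF commutes_delta_pow[of m N u, unfolded commutes_def, THEN artin_eq.sym], of v]
  by simp

lemma absorb_delta: "artin_eq m (word_pow (delta m) N @ u @ delta m) (word_pow (delta m) (N + 1) @ u)"
proof -
  have "artin_eq m (word_pow (delta m) N @ u @ delta m) (word_pow (delta m) N @ delta m @ u)"
    using artin_eq_append_left[OF commutes_delta[of m u, unfolded commutes_def, THEN artin_eq.sym]] by simp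
  also have "artin_eq m (\<dots>) (word_pow (delta m) (N + 1) @ u)"
    using artin_eq_append_right[OF word_pow_append[of m "delta m" N], of u] by simp
  finally show ?thesis .
qed

section \<open>Normal forms in a free product of two cyclic groups\<close>

lemma div_mod_succ:
  fixes x q :: int
  assumes "0 < q"
  shows "((x + 1) div q, (x + 1) mod q)
    = (if x mod q + 1 = q then (x div q + 1, 0) else (x div q, x mod q + 1))"
proof (cases "x mod q + 1 = q")
  case True
  have "q * (x div q + 1) = q * (x div q) + q" by (simp add: distrib_left)
  then have eq: "x + 1 = q * (x div q + 1) + 0" using mult_div_mod_eq[of q x] True by linarith
  show ?thesis using True assms by (simp add: int_div_pos_eq[OF eq] int_mod_pos_eq[OF eq])
next
  case False
  have eq: "x + 1 = q * (x div q) + (x mod q + 1)" using mult_div_mod_eq[of q x] by simp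
  have "0 \<le> x mod q + 1" "x mod q + 1 < q"
    using False assms pos_mod_bound[of q x] pos_mod_sign[of q x] by linarith+
  then show ?thesis using False by (simp add: int_div_pos_eq[OF eq] int_mod_pos_eq[OF eq])
qed

lemma div_mod_pred:
  fixes x q :: int
  assumes "0 < q"
  shows "((x - 1) div q, (x - 1) mod q)
    = (if x mod q = 0 then (x div q - 1, q - 1) else (x div q, x mod q - 1))"
proof (cases "x mod q = 0")
  case True
  have eq: "x - 1 = q * (x div q - 1) + (q - 1)"
    using mult_div_mod_eq[of q x] True by (simp add: algebra_simps)
  show ?thesis using True assms by (simp add: int_div_pos_eq[OF eq] int_mod_pos_eq[OF eq])
next
  case False
  have eq: "x - 1 = q * (x div q) + (x mod q - 1)" using mult_div_mod_eq[of q x] by simp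
  have "0 \<le> x mod q - 1" "x mod q - 1 < q"
    using False assms pos_mod_bound[of q x] pos_mod_sign[of q x] by linarith+
  then show ?thesis using False by (simp add: int_div_pos_eq[OF eq] int_mod_pos_eq[OF eq])
qed

text \<open>A state \<open>(N, [f\<^sub>0, e\<^sub>1, f\<^sub>1, \<dots>, e\<^sub>k, f\<^sub>k])\<close> stands for
  \<open>\<delta>\<^sup>N x\<^sup>f\<^sup>0 y\<^sup>e\<^sup>1 x\<^sup>f\<^sup>1 \<dots> y\<^sup>e\<^sup>k x\<^sup>f\<^sup>k\<close>, where \<open>x\<^sup>q = \<delta>\<close> and \<open>y\<^sup>p = \<delta>\<close>;
  \<open>p = 0\<close> encodes a \<open>y\<close> of infinite order.\<close>

type_synonym nf_state = "int \<times> int list"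

fun rmul_x :: "int \<Rightarrow> nf_state \<Rightarrow> nf_state" where
  "rmul_x q (N, L) =
    (if last L + 1 = q then (N + 1, butlast L @ [0]) else (N, butlast L @ [last L + 1]))"

fun rmul_x_inv :: "int \<Rightarrow> nf_state \<Rightarrow> nf_state" where
  "rmul_x_inv q (N, L) =
    (if last L = 0 then (N - 1, butlast L @ [q - 1]) else (N, butlast L @ [last L - 1]))"

fun lmul_x_inv :: "int \<Rightarrow> nf_state \<Rightarrow> nf_state" where
  "lmul_x_inv q (N, L) =
    (if hd L = 0 then (N - 1, (q - 1) # tl L) else (N, (hd L - 1) # tl L))"

fun rmul_y :: "int \<Rightarrow> nf_state \<Rightarrow> nf_state" where
  "rmul_y p (N, L) = (if 3 \<le> length L \<and> last L = 0 then
     (if 0 < p \<and> last (butlast L) + 1 = p then (N + 1, butlast (butlast L))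
      else if last (butlast L) + 1 = 0 then (N, butlast (butlast L))
      else (N, butlast (butlast L) @ [last (butlast L) + 1, 0]))
   else (N, L @ [1, 0]))"

fun rmul_y_inv :: "int \<Rightarrow> nf_state \<Rightarrow> nf_state" where
  "rmul_y_inv p (N, L) = (if 3 \<le> length L \<and> last L = 0 then
     (if last (butlast L) - 1 = 0 then (N, butlast (butlast L))
      else (N, butlast (butlast L) @ [last (butlast L) - 1, 0]))
   else if 0 < p then (N - 1, L @ [p - 1, 0]) else (N, L @ [-1, 0]))"

fun lmul_y :: "int \<Rightarrow> nf_state \<Rightarrow> nf_state" where
  "lmul_y p (N, L) = (if 3 \<le> length L \<and> hd L = 0 then
     (if 0 < p \<and> L ! 1 + 1 = p then (N + 1, drop 2 L)
      else if L ! 1 + 1 = 0 then (N, drop 2 L)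
      else (N, 0 # (L ! 1 + 1) # drop 2 L))
   else (N, 0 # 1 # L))"

definition x_exp :: "int \<Rightarrow> int \<Rightarrow> bool" where
  "x_exp q f \<longleftrightarrow> 0 \<le> f \<and> f < q"

definition y_exp :: "int \<Rightarrow> int \<Rightarrow> bool" where
  "y_exp p e \<longleftrightarrow> e \<noteq> 0 \<and> (0 < p \<longrightarrow> 0 < e \<and> e < p)"

fun normal_list :: "int \<Rightarrow> int \<Rightarrow> int list \<Rightarrow> bool" where
  "normal_list q p [] = False"
| "normal_list q p [f] = x_exp q f"
| "normal_list q p (f # e # L) =
    (x_exp q f \<and> y_exp p e \<and> normal_list q p L \<and> (1 < length L \<longrightarrow> hd L \<noteq> 0))"

lemma normal_list_odd_length: "normal_list q p L \<Longrightarrow> odd (length L)"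
  by (induction q p L rule: normal_list.induct) auto

lemma normal_list_length_ge_3: "normal_list q p L \<Longrightarrow> 1 < length L \<Longrightarrow> 3 \<le> length L"
  by (drule normal_list_odd_length) presburger

lemma normal_list_snoc:
  "normal_list q p (L @ [e, f])
    \<longleftrightarrow> normal_list q p L \<and> y_exp p e \<and> x_exp q f \<and> (1 < length L \<longrightarrow> last L \<noteq> 0)"
proof (induction q p L rule: normal_list.induct)
  case (3 q p g h L)
  then show ?case by (cases L; cases "tl L") auto
qed auto

lemma normal_list_update_last: "normal_list q p (B @ [f]) \<Longrightarrow> x_exp q f' \<Longrightarrow> normal_list q p (B @ [f'])"
proof (induction q p B rule: normal_list.induct)
  case (3 q p g h L)
  then show ?case by (cases L) auto
qed auto

lemma normal_list_update_hd: "normal_list q p (f # T) \<Longrightarrow> x_exp q f' \<Longrightarrow> normal_list q p (f' # T)"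
  by (cases T) auto

lemma normal_list_hd: "normal_list q p (f # T) \<Longrightarrow> x_exp q f"
  by (cases T) auto

lemma normal_list_last: "normal_list q p (B @ [f]) \<Longrightarrow> x_exp q f"
  by (cases B rule: rev_cases) (auto simp: normal_list_snoc[of q p _ _ f, simplified])

lemma normal_list_snocE:
  assumes "normal_list q p L"
  obtains B f where "L = B @ [f]" and "x_exp q f" and "even (length B)"
proof -
  have "L \<noteq> []" using assms by auto
  then obtain B f where L: "L = B @ [f]" by (cases L rule: rev_cases) auto
  show ?thesis
    using that[OF L] normal_list_last[of q p B f] normal_list_odd_length[OF assms] assms L by simp
qed

lemma normal_list_ConsE:
  assumes "normal_list q p L"
  obtains f T where "L = f # T" and "x_exp q f"
  using assms normal_list_hd by (cases L) auto

lemma snoc2E: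
  assumes "2 \<le> length L"
  obtains B e f where "L = B @ [e, f]"
proof -
  obtain L' f where L: "L = L' @ [f]" using assms by (cases L rule: rev_cases) auto
  moreover obtain B e where "L' = B @ [e]" using assms L by (cases L' rule: rev_cases) auto
  ultimately show ?thesis using that by simp
qed

lemma normal_list_y_lastE:
  assumes "normal_list q p L" and "3 \<le> length L \<and> last L = 0"
  obtains B e where "L = B @ [e, 0]" and "normal_list q p B" and "y_exp p e"
    and "1 < length B \<longrightarrow> last B \<noteq> 0" and "1 \<le> length B"
proof -
  obtain B e f where L: "L = B @ [e, f]" using assms(2) snoc2E[of L] by force
  then show ?thesis using that assms normal_list_snoc[of q p B e f] by (cases B) auto
qed

lemma normal_list_y_hdE:
  assumes "normal_list q p L" and "3 \<le> length L \<and> hd L = 0"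
  obtains e T where "L = 0 # e # T" and "normal_list q p T" and "y_exp p e"
    and "1 < length T \<longrightarrow> hd T \<noteq> 0" and "1 \<le> length T"
  using assms by (cases L; cases "tl L") (auto simp: Suc_le_eq)

lemma rmul_y_merge:
  "1 \<le> length B \<Longrightarrow> rmul_y p (N, B @ [e, 0]) = (if 0 < p \<and> e + 1 = p then (N + 1, B)
      else if e + 1 = 0 then (N, B) else (N, B @ [e + 1, 0]))"
  and rmul_y_inv_merge:
  "1 \<le> length B \<Longrightarrow> rmul_y_inv p (N, B @ [e, 0]) = (if e - 1 = 0 then (N, B) else (N, B @ [e - 1, 0]))"
  and lmul_y_merge:
  "1 \<le> length T \<Longrightarrow> lmul_y p (N, 0 # e # T) = (if 0 < p \<and> e + 1 = p then (N + 1, T)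
      else if e + 1 = 0 then (N, T) else (N, 0 # (e + 1) # T))"
  by (simp_all add: butlast_append)

lemma rmul_y_append: "\<not> (3 \<le> length L \<and> last L = 0) \<Longrightarrow> rmul_y p (N, L) = (N, L @ [1, 0])"
  and rmul_y_inv_append: "\<not> (3 \<le> length L \<and> last L = 0) \<Longrightarrow>
    rmul_y_inv p (N, L) = (if 0 < p then (N - 1, L @ [p - 1, 0]) else (N, L @ [-1, 0]))"
  and lmul_y_prepend: "\<not> (3 \<le> length L \<and> hd L = 0) \<Longrightarrow> lmul_y p (N, L) = (N, 0 # 1 # L)"
  by (simp_all only: rmul_y.simps rmul_y_inv.simps lmul_y.simps if_False)

lemma funpow_invariant: "(\<And>S. P S \<Longrightarrow> P (f S)) \<Longrightarrow> P S \<Longrightarrow> P ((f ^^ n) S)"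
  by (induction n) auto

lemma funpow_inverse:
  assumes "\<And>S. P S \<Longrightarrow> P (g S)" and "\<And>S. P S \<Longrightarrow> f (g S) = S" and "P S"
  shows "(f ^^ n) ((g ^^ n) S) = S"
  using assms(3)
proof (induction n arbitrary: S)
  case (Suc n)
  have "(f ^^ Suc n) ((g ^^ Suc n) S) = (f ^^ n) (f (g ((g ^^ n) S)))"
    by (simp add: funpow_swap1)
  also have "\<dots> = (f ^^ n) ((g ^^ n) S)" using assms(1,2) Suc.prems funpow_invariant[of P g S n] by simp
  finally show ?case using Suc by simp
qed simp

definition shift_delta :: "int \<Rightarrow> nf_state \<Rightarrow> nf_state" where
  "shift_delta k S = (fst S + k, snd S)"

lemma shift_delta_Pair [simp]: "shift_delta k (N, L) = (N + k, L)"
  and shift_delta_0 [simp]: "shift_delta 0 S = S"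
  and shift_delta_shift_delta [simp]: "shift_delta k (shift_delta l S) = shift_delta (k + l) S"
  by (simp_all add: shift_delta_def algebra_simps)

lemma rmul_x_shift: "rmul_x q (shift_delta k S) = shift_delta k (rmul_x q S)"
  and rmul_x_inv_shift: "rmul_x_inv q (shift_delta k S) = shift_delta k (rmul_x_inv q S)"
  and rmul_y_shift: "rmul_y p (shift_delta k S) = shift_delta k (rmul_y p S)"
  and rmul_y_inv_shift: "rmul_y_inv p (shift_delta k S) = shift_delta k (rmul_y_inv p S)"
  by (cases S; simp add: algebra_simps)+

lemma funpow_shift:
  "(\<And>S. f (shift_delta k S) = shift_delta k (f S)) \<Longrightarrow> (f ^^ n) (shift_delta k S) = shift_delta k ((f ^^ n) S)"
  by (induction n) auto

locale cyclic_free_product =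
  fixes q p :: int
  assumes q_pos: "0 < q" and p_cases: "p = 0 \<or> 2 \<le> p"
begin

definition normal_state :: "nf_state \<Rightarrow> bool" where
  "normal_state S \<longleftrightarrow> normal_list q p (snd S)"

lemma normal_state_shift [simp]: "normal_state (shift_delta k S) = normal_state S"
  by (simp add: normal_state_def shift_delta_def)

lemma normal_stateE:
  assumes "normal_state S"
  obtains N L where "S = (N, L)" and "normal_list q p L"
  using assms by (cases S) (simp add: normal_state_def)

lemma normal_state_snocE:
  assumes "normal_state S"
  obtains N B f where "S = (N, B @ [f])" and "x_exp q f" and "even (length B)"
proof -
  obtain N L where "S = (N, L)" and "normal_list q p L" using assms by (rule normal_stateE)
  then show ?thesis using that by (metis normal_list_snocE)
qed

lemma normal_state_ConsE:
  assumes "normal_state S"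
  obtains N f T where "S = (N, f # T)" and "x_exp q f"
proof -
  obtain N L where "S = (N, L)" and "normal_list q p L" using assms by (rule normal_stateE)
  then show ?thesis using that by (metis normal_list_ConsE)
qed

lemma x_exp_0: "x_exp q 0"
  using q_pos by (simp add: x_exp_def)

lemma y_exp_1: "y_exp p 1"
  using p_cases by (auto simp: y_exp_def)

lemma normal_state_rmul_x: "normal_state S \<Longrightarrow> normal_state (rmul_x q S)"
  and normal_state_rmul_x_inv: "normal_state S \<Longrightarrow> normal_state (rmul_x_inv q S)"
proof -
  assume "normal_state S"
  then obtain N B f where S: "S = (N, B @ [f])" and L: "normal_list q p (B @ [f])" and "x_exp q f"
    by (metis normal_stateE normal_list_snocE)
  then have "normal_list q p (B @ [f'])" if "0 \<le> f'" "f' < q" for f'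
    using normal_list_update_last[OF L] that by (simp add: x_exp_def)
  then show "normal_state (rmul_x q S)" "normal_state (rmul_x_inv q S)"
    using \<open>x_exp q f\<close> q_pos by (auto simp: S normal_state_def x_exp_def)
qed

lemma normal_state_lmul_x_inv: "normal_state S \<Longrightarrow> normal_state (lmul_x_inv q S)"
proof -
  assume "normal_state S"
  then obtain N f T where S: "S = (N, f # T)" and L: "normal_list q p (f # T)" and "x_exp q f"
    by (metis normal_stateE normal_list_ConsE)
  then have "normal_list q p (f' # T)" if "0 \<le> f'" "f' < q" for f'
    using normal_list_update_hd[OF L] that by (simp add: x_exp_def)
  then show ?thesis using \<open>x_exp q f\<close> q_pos by (auto simp: S normal_state_def x_exp_def)
qed

lemma normal_state_rmul_y: "normal_state S \<Longrightarrow> normal_state (rmul_y p S)"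
  and normal_state_rmul_y_inv: "normal_state S \<Longrightarrow> normal_state (rmul_y_inv p S)"
proof -
  assume "normal_state S"
  then obtain N L where S: "S = (N, L)" and L: "normal_list q p L" by (rule normal_stateE)
  have "normal_state (rmul_y p S) \<and> normal_state (rmul_y_inv p S)"
  proof (cases "3 \<le> length L \<and> last L = 0")
    case True
    then obtain B e where "L = B @ [e, 0]" "normal_list q p B" "y_exp p e"
      "1 < length B \<longrightarrow> last B \<noteq> 0" "1 \<le> length B"
      using normal_list_y_lastE[OF L] by blast
    then show ?thesis
      using x_exp_0
      by (auto simp: S normal_state_def rmul_y_merge rmul_y_inv_merge normal_list_snoc y_exp_def
          simp del: rmul_y.simps rmul_y_inv.simps)
  next
    case False
    then have "1 < length L \<longrightarrow> last L \<noteq> 0" using normal_list_length_ge_3[OF L] by auto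
    moreover have "y_exp p (p - 1)" if "0 < p" using p_cases that by (auto simp: y_exp_def)
    moreover have "y_exp p (-1)" if "\<not> 0 < p" using p_cases that by (auto simp: y_exp_def)
    ultimately show ?thesis
      using False L x_exp_0 y_exp_1
      by (simp add: S normal_state_def rmul_y_append rmul_y_inv_append normal_list_snoc
          del: rmul_y.simps rmul_y_inv.simps)
  qed
  then show "normal_state (rmul_y p S)" "normal_state (rmul_y_inv p S)" by simp_all
qed

lemma normal_state_lmul_y: "normal_state S \<Longrightarrow> normal_state (lmul_y p S)"
proof -
  assume "normal_state S"
  then obtain N L where S: "S = (N, L)" and L: "normal_list q p L" by (rule normal_stateE)
  show ?thesis
  proof (cases "3 \<le> length L \<and> hd L = 0")
    case True
    then obtain e T where "L = 0 # e # T" "normal_list q p T" "y_exp p e"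
      "1 < length T \<longrightarrow> hd T \<noteq> 0" "1 \<le> length T"
      using normal_list_y_hdE[OF L] by blast
    then show ?thesis using x_exp_0 by (auto simp: S normal_state_def y_exp_def)
  next
    case False
    then have "1 < length L \<longrightarrow> hd L \<noteq> 0" using normal_list_length_ge_3[OF L] by auto
    then show ?thesis
      using L x_exp_0 y_exp_1 by (simp add: S normal_state_def lmul_y_prepend[OF False] del: lmul_y.simps)
  qed
qed

lemma rmul_x_rmul_x_inv: "normal_state S \<Longrightarrow> rmul_x q (rmul_x_inv q S) = S"
  and rmul_x_inv_rmul_x: "normal_state S \<Longrightarrow> rmul_x_inv q (rmul_x q S) = S"
proof -
  assume "normal_state S"
  then obtain N B f where "S = (N, B @ [f])" and "x_exp q f" by (rule normal_state_snocE)
  then show "rmul_x q (rmul_x_inv q S) = S" "rmul_x_inv q (rmul_x q S) = S"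
    by (auto simp: x_exp_def)
qed

lemma rmul_y_rmul_y_inv: "normal_state S \<Longrightarrow> rmul_y p (rmul_y_inv p S) = S"
  and rmul_y_inv_rmul_y: "normal_state S \<Longrightarrow> rmul_y_inv p (rmul_y p S) = S"
proof -
  assume "normal_state S"
  then obtain N L where S: "S = (N, L)" and L: "normal_list q p L" by (rule normal_stateE)
  have "1 \<le> length L" using L by (cases L) auto
  show "rmul_y p (rmul_y_inv p S) = S" "rmul_y_inv p (rmul_y p S) = S"
  proof (atomize (full), cases "3 \<le> length L \<and> last L = 0")
    case True
    then obtain B e where B: "L = B @ [e, 0]" "y_exp p e" "1 < length B \<longrightarrow> last B \<noteq> 0" "1 \<le> length B"
      using normal_list_y_lastE[OF L] by blast
    then have "\<not> (3 \<le> length B \<and> last B = 0)" by auto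
    then show "rmul_y p (rmul_y_inv p S) = S \<and> rmul_y_inv p (rmul_y p S) = S"
      using B p_cases
      by (auto simp: S y_exp_def rmul_y_merge rmul_y_inv_merge rmul_y_append rmul_y_inv_append
          simp del: rmul_y.simps rmul_y_inv.simps)
  next
    case False
    then show "rmul_y p (rmul_y_inv p S) = S \<and> rmul_y_inv p (rmul_y p S) = S"
      using \<open>1 \<le> length L\<close>
      by (simp add: S rmul_y_merge rmul_y_inv_merge rmul_y_append rmul_y_inv_append
          del: rmul_y.simps rmul_y_inv.simps)
  qed
qed

lemma rmul_x_funpow:
  "x_exp q f \<Longrightarrow> (rmul_x q ^^ j) (N, B @ [f]) = (N + (f + int j) div q, B @ [(f + int j) mod q])"
proof (induction j)
  case (Suc j)
  then show ?case
    using div_mod_succ[OF q_pos, of "f + int j"] by (auto simp: algebra_simps split: if_splits)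
qed (simp add: x_exp_def)

lemma rmul_x_inv_funpow:
  "x_exp q f \<Longrightarrow> (rmul_x_inv q ^^ j) (N, B @ [f]) = (N + (f - int j) div q, B @ [(f - int j) mod q])"
proof (induction j)
  case (Suc j)
  then show ?case
    using div_mod_pred[OF q_pos, of "f - int j"] by (auto simp: algebra_simps split: if_splits)
qed (simp add: x_exp_def)

lemma lmul_x_inv_funpow:
  "x_exp q f \<Longrightarrow> (lmul_x_inv q ^^ j) (N, f # T) = (N + (f - int j) div q, ((f - int j) mod q) # T)"
proof (induction j)
  case (Suc j)
  then show ?case
    using div_mod_pred[OF q_pos, of "f - int j"] by (auto simp: algebra_simps split: if_splits)
qed (simp add: x_exp_def)

lemma normal_state_rmul_x_funpow: "normal_state S \<Longrightarrow> normal_state ((rmul_x q ^^ n) S)"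
  by (rule funpow_invariant[where P = normal_state]) (auto intro: normal_state_rmul_x)

lemma normal_state_rmul_x_inv_funpow: "normal_state S \<Longrightarrow> normal_state ((rmul_x_inv q ^^ n) S)"
  by (rule funpow_invariant[where P = normal_state]) (auto intro: normal_state_rmul_x_inv)

lemma normal_state_lmul_x_inv_funpow: "normal_state S \<Longrightarrow> normal_state ((lmul_x_inv q ^^ n) S)"
  by (rule funpow_invariant[where P = normal_state]) (auto intro: normal_state_lmul_x_inv)

lemma rmul_x_rmul_x_inv_funpow: "normal_state S \<Longrightarrow> (rmul_x q ^^ n) ((rmul_x_inv q ^^ n) S) = S"
  by (rule funpow_inverse[where P = normal_state]) (auto intro: normal_state_rmul_x_inv rmul_x_rmul_x_inv)

lemma rmul_x_inv_rmul_x_funpow: "normal_state S \<Longrightarrow> (rmul_x_inv q ^^ n) ((rmul_x q ^^ n) S) = S"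
  by (rule funpow_inverse[where P = normal_state]) (auto intro: normal_state_rmul_x rmul_x_inv_rmul_x)

lemma rmul_x_funpow_order: "normal_state S \<Longrightarrow> (rmul_x q ^^ nat q) S = shift_delta 1 S"
proof -
  assume "normal_state S"
  then obtain N B f where S: "S = (N, B @ [f])" and f: "x_exp q f" by (rule normal_state_snocE)
  have "f + q = q * 1 + f" by simp
  with f have "(f + q) div q = 1" "(f + q) mod q = f"
    by (simp_all only: int_div_pos_eq int_mod_pos_eq x_exp_def)
  then show ?thesis using rmul_x_funpow[OF f, of "nat q" N B] q_pos S by simp
qed

lemma rmul_y_inv_order_2:
  assumes "p = 2" and "normal_state S"
  shows "rmul_y_inv p S = shift_delta (-1) (rmul_y p S)"
proof -
  obtain N L where S: "S = (N, L)" and L: "normal_list q p L" using assms(2) by (rule normal_stateE)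
  show ?thesis
  proof (cases "3 \<le> length L \<and> last L = 0")
    case True
    then obtain B e where "L = B @ [e, 0]" "y_exp p e" "1 \<le> length B"
      using normal_list_y_lastE[OF L] by blast
    then show ?thesis
      using assms(1) by (auto simp: S y_exp_def rmul_y_merge rmul_y_inv_merge simp del: rmul_y.simps rmul_y_inv.simps)
  next
    case False
    then show ?thesis
      using assms(1) by (simp add: S rmul_y_append rmul_y_inv_append del: rmul_y.simps rmul_y_inv.simps)
  qed
qed

end

section \<open>The action of the Artin group on normal forms\<close>

definition x_ord :: "nat \<Rightarrow> int" where
  "x_ord m = (if odd m then int m else int (m div 2))"

definition y_ord :: "nat \<Rightarrow> int" where
  "y_ord m = (if odd m then 2 else 0)"

definition y_shift :: "nat \<Rightarrow> nat" where
  "y_shift m = (if odd m then m div 2 else 0)"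

definition X_word :: word where
  "X_word = [(False, True), (True, True)]"

definition Y_word :: "nat \<Rightarrow> word" where
  "Y_word m = (if odd m then Delta m else [(False, True)])"

text \<open>With \<open>c = y_shift m\<close> we have \<open>y = x\<^sup>c a\<^sub>1\<close>, hence \<open>a\<^sub>1 = x\<^sup>-\<^sup>c y\<close> and \<open>a\<^sub>2 = a\<^sub>1\<^sup>-\<^sup>1x = y\<^sup>-\<^sup>1x\<^sup>c\<^sup>+\<^sup>1\<close>.\<close>

definition act_letter :: "nat \<Rightarrow> letter \<Rightarrow> nf_state \<Rightarrow> nf_state" where
  "act_letter m x S = (if snd x then
      (if fst x then (rmul_x (x_ord m) ^^ (y_shift m + 1)) (rmul_y_inv (y_ord m) S)
       else rmul_y (y_ord m) ((rmul_x_inv (x_ord m) ^^ y_shift m) S))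
    else
      (if fst x then rmul_y (y_ord m) ((rmul_x_inv (x_ord m) ^^ (y_shift m + 1)) S)
       else (rmul_x (x_ord m) ^^ y_shift m) (rmul_y_inv (y_ord m) S)))"

definition act_word :: "nat \<Rightarrow> word \<Rightarrow> nf_state \<Rightarrow> nf_state" where
  "act_word m w S = fold (act_letter m) w S"

definition nf :: "nat \<Rightarrow> word \<Rightarrow> nf_state" where
  "nf m w = act_word m w (0, [0])"

lemma act_word_Nil [simp]: "act_word m [] S = S"
  and act_word_Cons [simp]: "act_word m (x # w) S = act_word m w (act_letter m x S)"
  and act_word_append [simp]: "act_word m (u @ v) S = act_word m v (act_word m u S)"
  by (simp_all add: act_word_def)

lemma nf_append: "nf m (u @ v) = act_word m v (nf m u)"
  by (simp add: nf_def)

lemma act_word_replicate: "act_word m (concat (replicate n [x])) S = (act_letter m x ^^ n) S"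
  by (induction n arbitrary: S) (simp_all add: funpow_swap1)

lemma act_letter_shift: "act_letter m x (shift_delta k S) = shift_delta k (act_letter m x S)"
  by (simp add: act_letter_def funpow_shift rmul_x_shift rmul_x_inv_shift rmul_y_shift rmul_y_inv_shift
      del: funpow.simps)

lemma act_word_shift: "act_word m w (shift_delta k S) = shift_delta k (act_word m w S)"
  by (induction w arbitrary: S) (simp_all add: act_letter_shift)

locale dihedral_artin =
  fixes m :: nat
  assumes two_le_m: "2 \<le> m"

sublocale dihedral_artin \<subseteq> cyclic_free_product "x_ord m" "y_ord m"
  using two_le_m by unfold_locales (auto simp: x_ord_def y_ord_def)

context dihedral_artin
begin

lemma normal_state_act_letter: "normal_state S \<Longrightarrow> normal_state (act_letter m x S)"
  by (auto simp: act_letter_def simp del: funpow.simps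
      intro!: normal_state_rmul_x_funpow normal_state_rmul_x_inv_funpow normal_state_rmul_y normal_state_rmul_y_inv)

lemma normal_state_act_word: "normal_state S \<Longrightarrow> normal_state (act_word m w S)"
  by (induction w arbitrary: S) (simp_all add: normal_state_act_letter)

lemma normal_state_init: "normal_state (0, [0])"
  using x_exp_0 by (simp add: normal_state_def)

lemma normal_state_nf: "normal_state (nf m w)"
  by (simp add: nf_def normal_state_act_word normal_state_init)

lemma act_letter_inv_letter: "normal_state S \<Longrightarrow> act_letter m (inv_letter x) (act_letter m x S) = S"
  by (cases x) (auto simp: act_letter_def inv_letter_def normal_state_rmul_y_inv normal_state_rmul_x_inv_funpow
      normal_state_rmul_x_funpow rmul_x_inv_rmul_x_funpow rmul_x_rmul_x_inv_funpow rmul_y_rmul_y_inv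
      rmul_y_inv_rmul_y simp del: funpow.simps)

lemma act_word_X: "normal_state S \<Longrightarrow> act_word m X_word S = rmul_x (x_ord m) S"
  by (simp add: X_word_def act_letter_def rmul_y_inv_rmul_y normal_state_rmul_x_inv_funpow
      rmul_x_rmul_x_inv_funpow)

lemma act_word_X_pow: "normal_state S \<Longrightarrow> act_word m (concat (replicate k X_word)) S = (rmul_x (x_ord m) ^^ k) S"
  by (induction k arbitrary: S) (simp_all add: act_word_X normal_state_rmul_x funpow_swap1)

lemma act_word_a2_a1:
  "normal_state S \<Longrightarrow>
    act_word m [(True, True), (False, True)] S = rmul_y (y_ord m) (rmul_x (x_ord m) (rmul_y_inv (y_ord m) S))"
  by (simp add: act_letter_def rmul_x_inv_rmul_x_funpow normal_state_rmul_x normal_state_rmul_y_inv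
      funpow_Suc_right del: funpow.simps)

lemma act_word_a2_a1_pow:
  "normal_state S \<Longrightarrow> act_word m (concat (replicate k [(True, True), (False, True)])) S
    = rmul_y (y_ord m) ((rmul_x (x_ord m) ^^ k) (rmul_y_inv (y_ord m) S))"
proof (induction k arbitrary: S)
  case (Suc k)
  let ?S = "rmul_y (y_ord m) (rmul_x (x_ord m) (rmul_y_inv (y_ord m) S))"
  have "normal_state ?S"
    using Suc.prems by (simp add: normal_state_rmul_y normal_state_rmul_x normal_state_rmul_y_inv)
  moreover have "rmul_y_inv (y_ord m) ?S = rmul_x (x_ord m) (rmul_y_inv (y_ord m) S)"
    using Suc.prems by (simp add: rmul_y_inv_rmul_y normal_state_rmul_x normal_state_rmul_y_inv)
  ultimately show ?case using Suc act_word_a2_a1 by (simp add: funpow_swap1)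
qed (simp add: rmul_y_rmul_y_inv)

lemma act_word_Delta_Pi:
  assumes "normal_state S"
  shows "act_word m (Delta m) S = (if odd m then rmul_y (y_ord m) S else shift_delta 1 S)
    \<and> act_word m (Pi True False m) S = (if odd m then rmul_y (y_ord m) S else shift_delta 1 S)"
proof -
  let ?R = "rmul_y_inv (y_ord m) S"
  have R: "normal_state ?R" using assms by (rule normal_state_rmul_y_inv)
  show ?thesis
  proof (cases "odd m")
    case True
    define c where "c = y_shift m"
    have m: "m = 2 * c + 1" using True by (simp add: c_def y_shift_def)
    then have q: "nat (x_ord m) = Suc c + c" and p: "y_ord m = 2"
      using True by (simp_all add: x_ord_def y_ord_def)
    have "Delta m = concat (replicate c X_word) @ [(False, True)]"
      by (simp only: m Delta_def Pi_odd X_word_def)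
    then have D: "act_word m (Delta m) S = rmul_y (y_ord m) S"
      using assms by (simp add: act_word_X_pow act_letter_def c_def rmul_x_inv_rmul_x_funpow del: funpow.simps)
    have "Pi True False m = concat (replicate c [(True, True), (False, True)]) @ [(True, True)]"
      by (simp only: m Pi_odd)
    then have "act_word m (Pi True False m) S = (rmul_x (x_ord m) ^^ Suc c) ((rmul_x (x_ord m) ^^ c) ?R)"
      using assms R by (simp add: act_word_a2_a1_pow act_letter_def c_def rmul_y_inv_rmul_y
          normal_state_rmul_x_funpow del: funpow.simps)
    also have "\<dots> = (rmul_x (x_ord m) ^^ nat (x_ord m)) ?R" by (simp only: q funpow_add comp_def)
    also have "\<dots> = shift_delta 1 ?R" using R by (rule rmul_x_funpow_order)
    also have "\<dots> = rmul_y (y_ord m) S" using rmul_y_inv_order_2[OF p assms] by simp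
    finally show ?thesis using D True by simp
  next
    case False
    define k where "k = m div 2"
    have m: "m = 2 * k" and q: "nat (x_ord m) = k" using False by (simp_all add: k_def x_ord_def)
    have "Delta m = concat (replicate k X_word)" by (simp only: m Delta_def Pi_even X_word_def)
    then have D: "act_word m (Delta m) S = shift_delta 1 S"
      using assms rmul_x_funpow_order[OF assms] by (simp add: act_word_X_pow q)
    have "Pi True False m = concat (replicate k [(True, True), (False, True)])"
      by (simp only: m Pi_even)
    then have "act_word m (Pi True False m) S = shift_delta 1 S"
      using assms rmul_x_funpow_order[OF R]
      by (simp add: act_word_a2_a1_pow q rmul_y_shift rmul_y_rmul_y_inv)
    then show ?thesis using D False by simp
  qed
qed

lemmas act_word_Delta = act_word_Delta_Pi[THEN conjunct1]

lemma act_word_artin_eq: "artin_eq m u v \<Longrightarrow> normal_state S \<Longrightarrow> act_word m u S = act_word m v S"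
proof (induction u v arbitrary: S rule: artin_eq.induct)
  case (cong u v x y)
  then show ?case by (simp add: normal_state_act_word)
next
  case (cancel x)
  then show ?case by (simp add: act_letter_inv_letter)
next
  case braid
  then show ?case using act_word_Delta_Pi by (simp add: Delta_def)
qed simp_all

lemma nf_artin_eq: "artin_eq m u v \<Longrightarrow> nf m u = nf m v"
  by (simp add: nf_def act_word_artin_eq normal_state_init)

end

fun syllables_word :: "nat \<Rightarrow> int list \<Rightarrow> word" where
  "syllables_word m [] = []"
| "syllables_word m [f] = word_pow X_word f"
| "syllables_word m (f # e # L) = word_pow X_word f @ word_pow (Y_word m) e @ syllables_word m L"

definition state_word :: "nat \<Rightarrow> nf_state \<Rightarrow> word" where
  "state_word m S = word_pow (delta m) (fst S) @ syllables_word m (snd S)"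

lemma state_word_Pair [simp]: "state_word m (N, L) = word_pow (delta m) N @ syllables_word m L"
  by (simp add: state_word_def)

lemma syllables_word_snoc:
  "odd (length L) \<Longrightarrow> syllables_word m (L @ [e, f]) = syllables_word m L @ word_pow (Y_word m) e @ word_pow X_word f"
  by (induction m L rule: syllables_word.induct) auto

lemma syllables_word_last:
  "even (length B) \<Longrightarrow> syllables_word m (B @ [f]) = syllables_word m (B @ [0]) @ word_pow X_word f"
  by (induction m B rule: syllables_word.induct) auto

lemma syllables_word_hd: "syllables_word m (f # T) = word_pow X_word f @ syllables_word m (0 # T)"
  by (cases T) auto

lemma Cons_concat_replicate: "x # concat (replicate c [y, x]) = concat (replicate c [x, y]) @ [x]"
  by (induction c) auto

lemma Y_word_eq: "Y_word m = concat (replicate (y_shift m) X_word) @ [(False, True)]"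
proof (cases "odd m")
  case True
  then have "m = 2 * (m div 2) + 1" by simp
  then have "Delta m = concat (replicate (m div 2) X_word) @ [(False, True)]"
    by (metis Delta_def Pi_odd X_word_def)
  then show ?thesis using True by (simp add: Y_word_def y_shift_def)
qed (simp add: Y_word_def y_shift_def)

lemma X_word_pow_x_ord: "artin_eq m (word_pow X_word (x_ord m)) (delta m)"
proof (cases "odd m")
  case True
  define c where "c = m div 2"
  have m: "m = 2 * c + 1" using True by (simp add: c_def)
  have "x_ord m = int (c + c + 1)" using True by (simp add: x_ord_def m)
  then have "word_pow X_word (x_ord m) = concat (replicate c X_word) @ concat (replicate c X_word) @ X_word"
    by (simp only: word_pow_of_nat Suc_eq_plus1[symmetric] concat_replicate_Suc replicate_add
        concat_append append_assoc)
  also have "\<dots> = Delta m @ Pi True False m"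
  proof -
    have "Delta m = concat (replicate c X_word) @ [(False, True)]"
      by (simp only: m Delta_def Pi_odd X_word_def)
    moreover have "Pi True False m = concat (replicate c [(True, True), (False, True)]) @ [(True, True)]"
      by (simp only: m Pi_odd)
    moreover have "concat (replicate c X_word) @ X_word
        = (False, True) # concat (replicate c [(True, True), (False, True)]) @ [(True, True)]"
      using Cons_concat_replicate[of "(False, True)" c "(True, True)"] by (simp add: X_word_def)
    ultimately show ?thesis by simp
  qed
  finally have "word_pow X_word (x_ord m) = Delta m @ Pi True False m" .
  moreover have "artin_eq m (Delta m @ Pi True False m) (Delta m @ Delta m)"
    using artin_eq_append_left[OF artin_eq.sym[OF artin_eq.braid[of m]]] by (simp add: Delta_def)
  ultimately show ?thesis using True by (simp add: delta_def)
next
  case False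
  then have "m = 2 * (m div 2)" by simp
  then have "Delta m = concat (replicate (m div 2) X_word)" by (metis Delta_def Pi_even X_word_def)
  then show ?thesis using False by (simp add: x_ord_def delta_def)
qed

lemma Y_word_pow_y_ord: "0 < y_ord m \<Longrightarrow> artin_eq m (word_pow (Y_word m) (y_ord m)) (delta m)"
  by (simp add: y_ord_def Y_word_def delta_def word_pow_def numeral_2_eq_2 split: if_splits)

lemma absorb_word_pow:
  assumes "artin_eq m (word_pow w n) (delta m)"
  shows "artin_eq m (word_pow (delta m) N @ u @ word_pow w n @ v) (word_pow (delta m) (N + 1) @ u @ v)"
proof -
  have "artin_eq m (word_pow (delta m) N @ u @ word_pow w n @ v) ((word_pow (delta m) N @ u @ delta m) @ v)"
    using artin_eq_append_left[OF artin_eq_append_right[OF assms], of "word_pow (delta m) N @ u" v] by simp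
  also have "artin_eq m (\<dots>) (word_pow (delta m) (N + 1) @ u @ v)"
    using artin_eq_append_right[OF absorb_delta] by simp
  finally show ?thesis .
qed

context dihedral_artin
begin

lemma state_word_rmul_x: "normal_state S \<Longrightarrow> artin_eq m (state_word m (rmul_x (x_ord m) S)) (state_word m S @ X_word)"
  and state_word_rmul_x_inv:
    "normal_state S \<Longrightarrow> artin_eq m (state_word m (rmul_x_inv (x_ord m) S)) (state_word m S @ inv_word X_word)"
proof -
  assume "normal_state S"
  then obtain N B f where S: "S = (N, B @ [f])" and B: "even (length B)"
    by (rule normal_state_snocE)
  let ?D = "word_pow (delta m)" and ?u = "syllables_word m (B @ [0])"
  have w: "syllables_word m (B @ [g]) = ?u @ word_pow X_word g" for g
    using syllables_word_last[OF B, of m g] .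
  have up: "artin_eq m (state_word m (N, B @ [f + 1])) (state_word m S @ X_word)"
    using artin_eq_append_left[OF artin_eq.sym[OF word_pow_append[of m X_word f]], where u = "?D N @ ?u"]
    by (simp add: S w[of f] w[of "f + 1"])
  have down: "artin_eq m (state_word m (N, B @ [f - 1])) (state_word m S @ inv_word X_word)"
    using artin_eq_append_left[OF artin_eq.sym[OF word_pow_append_inv_word[of m X_word f]], where u = "?D N @ ?u"]
    by (simp add: S w[of f] w[of "f - 1"])
  show "artin_eq m (state_word m (rmul_x (x_ord m) S)) (state_word m S @ X_word)"
  proof (cases "f + 1 = x_ord m")
    case True
    have "artin_eq m (state_word m (N + 1, B @ [0])) (state_word m (N, B @ [f + 1]))"
      using artin_eq.sym[OF absorb_word_pow[OF X_word_pow_x_ord, where m = m and N = N and u = ?u and v = "[]"]]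
        True
      by (simp add: w[of "x_ord m"])
    then show ?thesis using True S artin_eq.trans[OF _ up] by simp
  qed (use S up in simp)
  show "artin_eq m (state_word m (rmul_x_inv (x_ord m) S)) (state_word m S @ inv_word X_word)"
  proof (cases "f = 0")
    case True
    have "artin_eq m (state_word m (N - 1, B @ [x_ord m - 1]))
        (?D (N - 1) @ ?u @ word_pow X_word (x_ord m) @ inv_word X_word)"
      using artin_eq_append_left[OF artin_eq.sym[OF word_pow_append_inv_word[of m X_word "x_ord m"]],
          where u = "?D (N - 1) @ ?u"]
      by (simp add: w[of "x_ord m - 1"])
    also have "artin_eq m (\<dots>) (state_word m S @ inv_word X_word)"
      using absorb_word_pow[OF X_word_pow_x_ord, where m = m and N = "N - 1" and u = ?u and v = "inv_word X_word"]
        True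
      by (simp add: S)
    finally show ?thesis using True S by simp
  qed (use S down in simp)
qed

lemma state_word_lmul_x_inv:
  "normal_state S \<Longrightarrow> artin_eq m (state_word m (lmul_x_inv (x_ord m) S)) (inv_word X_word @ state_word m S)"
proof -
  assume "normal_state S"
  then obtain N f T where S: "S = (N, f # T)" by (rule normal_state_ConsE)
  let ?D = "word_pow (delta m)" and ?v = "syllables_word m (0 # T)"
  have w: "syllables_word m (g # T) = word_pow X_word g @ ?v" for g
    by (rule syllables_word_hd)
  have move: "artin_eq m (?D N @ inv_word X_word @ word_pow X_word f @ ?v) (inv_word X_word @ state_word m S)"
    using artin_eq.sym[OF artin_eq_move_delta_pow[of m "inv_word X_word" N "word_pow X_word f @ ?v"]]
    by (simp add: S w[of f])
  show ?thesis
  proof (cases "f = 0")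
    case True
    have "artin_eq m (state_word m (N - 1, (x_ord m - 1) # T))
        (?D (N - 1) @ inv_word X_word @ word_pow X_word (x_ord m) @ ?v)"
      using artin_eq_append_left[OF artin_eq_append_right[OF
          artin_eq.sym[OF inv_word_append_word_pow[of m X_word "x_ord m"]], where v = ?v], where u = "?D (N - 1)"]
      by (simp add: w[of "x_ord m - 1"])
    also have "artin_eq m (\<dots>) (?D N @ inv_word X_word @ word_pow X_word f @ ?v)"
      using absorb_word_pow[OF X_word_pow_x_ord, where m = m and N = "N - 1" and u = "inv_word X_word" and v = ?v]
        True by simp
    finally show ?thesis using True S artin_eq.trans[OF _ move] by simp
  next
    case False
    have "artin_eq m (state_word m (N, (f - 1) # T)) (?D N @ inv_word X_word @ word_pow X_word f @ ?v)"
      using artin_eq_append_left[OF artin_eq_append_right[OF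
          artin_eq.sym[OF inv_word_append_word_pow[of m X_word f]], where v = ?v], where u = "?D N"]
      by (simp add: w[of "f - 1"])
    then show ?thesis using False S artin_eq.trans[OF _ move] by simp
  qed
qed

lemma state_word_rmul_y:
  assumes "normal_state S"
  shows "artin_eq m (state_word m (rmul_y (y_ord m) S)) (state_word m S @ Y_word m)"
proof -
  obtain N L where S: "S = (N, L)" and L: "normal_list (x_ord m) (y_ord m) L"
    using assms by (rule normal_stateE)
  let ?D = "word_pow (delta m)" and ?Y = "word_pow (Y_word m)"
  show ?thesis
  proof (cases "3 \<le> length L \<and> last L = 0")
    case True
    then obtain B e where B: "L = B @ [e, 0]" "normal_list (x_ord m) (y_ord m) B" "1 \<le> length B"
      using normal_list_y_lastE[OF L] by blast
    let ?s = "syllables_word m B"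
    have sL: "syllables_word m L = ?s @ ?Y e"
      using B syllables_word_snoc[OF normal_list_odd_length[OF B(2)], of m e 0] by simp
    have "artin_eq m (state_word m (rmul_y (y_ord m) S)) (?D N @ ?s @ ?Y (e + 1))"
    proof (cases "0 < y_ord m \<and> e + 1 = y_ord m")
      case True
      then show ?thesis
        using artin_eq.sym[OF absorb_word_pow[OF Y_word_pow_y_ord, where m = m and N = N and u = ?s and v = "[]"]]
        by (simp add: S B(1) rmul_y_merge[OF B(3)] del: rmul_y.simps)
    next
      case False
      then show ?thesis
        using syllables_word_snoc[OF normal_list_odd_length[OF B(2)], of m "e + 1" 0]
        by (auto simp add: S B(1) rmul_y_merge[OF B(3)] simp del: rmul_y.simps)
    qed
    also have "artin_eq m (\<dots>) (state_word m S @ Y_word m)"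
      using artin_eq_append_left[OF artin_eq.sym[OF word_pow_append[of m "Y_word m" e]], where u = "?D N @ ?s"]
      by (simp add: S sL)
    finally show ?thesis .
  next
    case False
    then show ?thesis
      using syllables_word_snoc[OF normal_list_odd_length[OF L], of m 1 0]
      by (simp add: S rmul_y_append del: rmul_y.simps)
  qed
qed

lemma state_word_rmul_y_inv:
  assumes "normal_state S"
  shows "artin_eq m (state_word m (rmul_y_inv (y_ord m) S)) (state_word m S @ inv_word (Y_word m))"
proof -
  obtain N L where S: "S = (N, L)" and L: "normal_list (x_ord m) (y_ord m) L"
    using assms by (rule normal_stateE)
  let ?D = "word_pow (delta m)" and ?Y = "word_pow (Y_word m)"
  show ?thesis
  proof (cases "3 \<le> length L \<and> last L = 0")
    case True
    then obtain B e where B: "L = B @ [e, 0]" "normal_list (x_ord m) (y_ord m) B" "1 \<le> length B"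
      using normal_list_y_lastE[OF L] by blast
    let ?s = "syllables_word m B"
    have sL: "syllables_word m L = ?s @ ?Y e"
      using B syllables_word_snoc[OF normal_list_odd_length[OF B(2)], of m e 0] by simp
    have "state_word m (rmul_y_inv (y_ord m) S) = ?D N @ ?s @ ?Y (e - 1)"
      using syllables_word_snoc[OF normal_list_odd_length[OF B(2)], of m "e - 1" 0]
      by (simp add: S B(1) rmul_y_inv_merge[OF B(3)] del: rmul_y_inv.simps)
    also have "artin_eq m (\<dots>) (state_word m S @ inv_word (Y_word m))"
      using artin_eq_append_left[OF artin_eq.sym[OF word_pow_append_inv_word[of m "Y_word m" e]],
          where u = "?D N @ ?s"]
      by (simp add: S sL)
    finally show ?thesis .
  next
    case False
    let ?s = "syllables_word m L"
    have sL: "syllables_word m (L @ [e, 0]) = ?s @ ?Y e" for e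
      using syllables_word_snoc[OF normal_list_odd_length[OF L], of m e 0] by simp
    show ?thesis
    proof (cases "0 < y_ord m")
      case True
      have "artin_eq m (state_word m (rmul_y_inv (y_ord m) S))
          (?D (N - 1) @ ?s @ ?Y (y_ord m) @ inv_word (Y_word m))"
        using artin_eq_append_left[OF artin_eq.sym[OF word_pow_append_inv_word[of m "Y_word m" "y_ord m"]],
            where u = "?D (N - 1) @ ?s"]
        by (simp add: S True rmul_y_inv_append[OF False] sL del: rmul_y_inv.simps)
      also have "artin_eq m (\<dots>) (state_word m S @ inv_word (Y_word m))"
        using absorb_word_pow[OF Y_word_pow_y_ord[OF True], where N = "N - 1" and u = ?s and v = "inv_word (Y_word m)"]
        by (simp add: S)
      finally show ?thesis .
    qed (simp add: S rmul_y_inv_append[OF False] sL del: rmul_y_inv.simps)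
  qed
qed

lemma state_word_lmul_y:
  assumes "normal_state S"
  shows "artin_eq m (state_word m (lmul_y (y_ord m) S)) (Y_word m @ state_word m S)"
proof -
  obtain N L where S: "S = (N, L)" and L: "normal_list (x_ord m) (y_ord m) L"
    using assms by (rule normal_stateE)
  let ?D = "word_pow (delta m)" and ?Y = "word_pow (Y_word m)"
  show ?thesis
  proof (cases "3 \<le> length L \<and> hd L = 0")
    case True
    then obtain e T where T: "L = 0 # e # T" "1 \<le> length T"
      using normal_list_y_hdE[OF L] by blast
    let ?s = "syllables_word m T"
    have "artin_eq m (state_word m (lmul_y (y_ord m) S)) (?D N @ ?Y (e + 1) @ ?s)"
    proof (cases "0 < y_ord m \<and> e + 1 = y_ord m")
      case True
      then show ?thesis
        using artin_eq.sym[OF absorb_word_pow[OF Y_word_pow_y_ord, where m = m and N = N and u = "[]" and v = ?s]]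
        by (simp add: S T(1) lmul_y_merge[OF T(2)] del: lmul_y.simps)
    qed (auto simp add: S T(1) lmul_y_merge[OF T(2)] simp del: lmul_y.simps)
    also have "artin_eq m (\<dots>) (?D N @ Y_word m @ ?Y e @ ?s)"
      using artin_eq_append_left[OF artin_eq_append_right[OF artin_eq.sym[OF append_word_pow[of m "Y_word m" e]],
          where v = ?s], where u = "?D N"]
      by simp
    also have "artin_eq m (\<dots>) (Y_word m @ state_word m S)"
      using artin_eq.sym[OF artin_eq_move_delta_pow[of m "Y_word m" N "?Y e @ ?s"]] by (simp add: S T)
    finally show ?thesis .
  next
    case False
    then show ?thesis
      using artin_eq.sym[OF artin_eq_move_delta_pow[of m "Y_word m" N "syllables_word m L"]]
      by (simp add: S lmul_y_prepend del: lmul_y.simps)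
  qed
qed

lemma state_word_funpow:
  assumes "\<And>T. normal_state T \<Longrightarrow> normal_state (f T)"
    and "\<And>T. normal_state T \<Longrightarrow> artin_eq m (state_word m (f T)) (state_word m T @ w)"
    and "normal_state S"
  shows "artin_eq m (state_word m ((f ^^ n) S)) (state_word m S @ concat (replicate n w))"
proof (induction n)
  case (Suc n)
  have "artin_eq m (state_word m ((f ^^ Suc n) S)) (state_word m ((f ^^ n) S) @ w)"
    using assms(2)[OF funpow_invariant[of normal_state f, OF assms(1) assms(3)]] by simp
  also have "artin_eq m (\<dots>) (state_word m S @ concat (replicate n w) @ w)"
    using artin_eq_append_right[OF Suc.IH] by simp
  finally show ?case by (simp add: concat_replicate_append_commute)
qed simp

lemma state_word_funpow_left:
  assumes "\<And>T. normal_state T \<Longrightarrow> normal_state (f T)"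
    and "\<And>T. normal_state T \<Longrightarrow> artin_eq m (state_word m (f T)) (w @ state_word m T)"
    and "normal_state S"
  shows "artin_eq m (state_word m ((f ^^ n) S)) (concat (replicate n w) @ state_word m S)"
proof (induction n)
  case (Suc n)
  have "artin_eq m (state_word m ((f ^^ Suc n) S)) (w @ state_word m ((f ^^ n) S))"
    using assms(2)[OF funpow_invariant[of normal_state f, OF assms(1) assms(3)]] by simp
  also have "artin_eq m (\<dots>) (w @ concat (replicate n w) @ state_word m S)"
    using artin_eq_append_left[OF Suc.IH] by simp
  finally show ?case by simp
qed simp

lemma state_word_rmul_x_funpow:
  "normal_state S \<Longrightarrow>
    artin_eq m (state_word m ((rmul_x (x_ord m) ^^ n) S)) (state_word m S @ concat (replicate n X_word))"
  by (rule state_word_funpow[OF normal_state_rmul_x state_word_rmul_x])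

lemma state_word_rmul_x_inv_funpow:
  "normal_state S \<Longrightarrow>
    artin_eq m (state_word m ((rmul_x_inv (x_ord m) ^^ n) S)) (state_word m S @ inv_word (concat (replicate n X_word)))"
  using state_word_funpow[OF normal_state_rmul_x_inv state_word_rmul_x_inv]
  by (simp add: inv_word_concat_replicate)

lemma state_word_act_letter:
  assumes S: "normal_state S"
  shows "artin_eq m (state_word m (act_letter m x S)) (state_word m S @ [x])"
proof -
  let ?w = "state_word m S" and ?Xc = "concat (replicate (y_shift m) X_word)"
  note R = state_word_rmul_x_funpow and Ri = state_word_rmul_x_inv_funpow
  have Y: "Y_word m = ?Xc @ [(False, True)]" by (rule Y_word_eq)
  have XY: "concat (replicate (y_shift m + 1) X_word) = Y_word m @ [(True, True)]"
    by (simp add: Y X_word_def concat_replicate_Suc[simplified])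
  have XY': "inv_word (concat (replicate (y_shift m + 1) X_word)) = [(True, False)] @ inv_word (Y_word m)"
    unfolding XY by (simp add: inv_letter_def)
  obtain g s where x: "x = (g, s)" by fastforce
  consider "s" "g" | "s" "\<not> g" | "\<not> s" "g" | "\<not> s" "\<not> g" by blast
  then show ?thesis
  proof cases
    case 1
    have "artin_eq m (state_word m (act_letter m x S)) (?w @ inv_word (Y_word m) @ Y_word m @ [x])"
      using artin_eq.trans[OF R[OF normal_state_rmul_y_inv[OF S], of "y_shift m + 1"]
          artin_eq_append_right[OF state_word_rmul_y_inv[OF S]]] 1 x XY
      by (simp add: act_letter_def del: funpow.simps)
    then show ?thesis using artin_eq.trans artin_eq_cancel_inv_middle[of m ?w _ "[x]"] by blast
  next
    case 2
    have "artin_eq m (state_word m (act_letter m x S)) (?w @ inv_word ?Xc @ ?Xc @ [x])"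
      using artin_eq.trans[OF state_word_rmul_y[OF normal_state_rmul_x_inv_funpow[OF S]]
          artin_eq_append_right[OF Ri[OF S]]] 2 x Y
      by (simp add: act_letter_def del: funpow.simps)
    then show ?thesis using artin_eq.trans artin_eq_cancel_inv_middle[of m ?w _ "[x]"] by blast
  next
    case 3
    have "artin_eq m (state_word m (act_letter m x S)) ((?w @ [x]) @ inv_word (Y_word m) @ Y_word m @ [])"
      using artin_eq.trans[OF state_word_rmul_y[OF normal_state_rmul_x_inv_funpow[OF S]]
          artin_eq_append_right[OF Ri[OF S, of "y_shift m + 1", unfolded XY']]] 3 x
      by (simp add: act_letter_def inv_letter_def del: funpow.simps)
    then show ?thesis using artin_eq.trans artin_eq_cancel_inv_middle[of m "?w @ [x]" _ "[]"] by fastforce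
  next
    case 4
    have "artin_eq m (state_word m (act_letter m x S)) ((?w @ [x]) @ inv_word ?Xc @ ?Xc @ [])"
      using artin_eq.trans[OF R[OF normal_state_rmul_y_inv[OF S]]
          artin_eq_append_right[OF state_word_rmul_y_inv[OF S]]] 4 x Y
      by (simp add: act_letter_def inv_letter_def del: funpow.simps)
    then show ?thesis using artin_eq.trans artin_eq_cancel_inv_middle[of m "?w @ [x]" _ "[]"] by fastforce
  qed
qed

lemma artin_eq_state_word_nf: "artin_eq m w (state_word m (nf m w))"
proof (induction w rule: rev_induct)
  case (snoc x w)
  have "artin_eq m (w @ [x]) (state_word m (nf m w) @ [x])"
    by (rule artin_eq_append_right[OF snoc.IH])
  also have "artin_eq m (\<dots>) (state_word m (nf m (w @ [x])))"
    using artin_eq.sym[OF state_word_act_letter[OF normal_state_nf]] by (simp add: nf_append)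
  finally show ?case .
qed (simp add: nf_def)

lemma nf_eq_imp_artin_eq: "nf m u = nf m v \<Longrightarrow> artin_eq m u v"
  using artin_eq_state_word_nf[of u] artin_eq_state_word_nf[of v] by (metis artin_eq.sym artin_eq.trans)

end

lemma rmul_y_0_funpow:
  assumes "1 \<le> length L" and "\<not> (3 \<le> length L \<and> last L = 0)"
  shows "(rmul_y 0 ^^ Suc j) (N, L) = (N, L @ [int j + 1, 0])"
    and "(rmul_y_inv 0 ^^ Suc j) (N, L) = (N, L @ [- int j - 1, 0])"
proof -
  show "(rmul_y 0 ^^ Suc j) (N, L) = (N, L @ [int j + 1, 0])"
    by (induction j) (simp_all add: rmul_y_append[OF assms(2)] rmul_y_merge[OF assms(1)] del: rmul_y.simps)
  show "(rmul_y_inv 0 ^^ Suc j) (N, L) = (N, L @ [- int j - 1, 0])"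
    by (induction j) (simp_all add: rmul_y_inv_append[OF assms(2)] rmul_y_inv_merge[OF assms(1)]
        del: rmul_y_inv.simps)
qed

lemma lmul_y_0_funpow:
  assumes "1 \<le> length L" and "\<not> (3 \<le> length L \<and> hd L = 0)"
  shows "(lmul_y 0 ^^ Suc j) (N, L) = (N, 0 # (int j + 1) # L)"
  by (induction j) (simp_all add: lmul_y_prepend[OF assms(2)] lmul_y_merge[OF assms(1)] del: lmul_y.simps)

lemma normal_list_snoc_induct:
  assumes "normal_list q p L"
    and "\<And>f. x_exp q f \<Longrightarrow> P [f]"
    and "\<And>L e f. normal_list q p L \<Longrightarrow> y_exp p e \<Longrightarrow> x_exp q f
      \<Longrightarrow> (1 < length L \<longrightarrow> last L \<noteq> 0) \<Longrightarrow> P L \<Longrightarrow> P (L @ [e, f])"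
  shows "P L"
  using assms(1)
proof (induction "length L" arbitrary: L rule: less_induct)
  case less
  show ?case
  proof (cases "length L = 1")
    case True
    then obtain f where "L = [f]" by (cases L) auto
    then show ?thesis using less.prems assms(2) by simp
  next
    case False
    then have "1 < length L" using less.prems by (cases L) auto
    then have "3 \<le> length L" using less.prems normal_list_length_ge_3 by blast
    then obtain B e f where L: "L = B @ [e, f]" using snoc2E[of L] by force
    then have "normal_list q p B" "y_exp p e" "x_exp q f" "1 < length B \<longrightarrow> last B \<noteq> 0"
      using less.prems normal_list_snoc by auto
    then show ?thesis using assms(3) less.hyps[of B] L by simp
  qed
qed

definition act_a1_left :: "nat \<Rightarrow> nf_state \<Rightarrow> nf_state" where
  "act_a1_left m S = (lmul_x_inv (x_ord m) ^^ y_shift m) (lmul_y (y_ord m) S)"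

context dihedral_artin
begin

lemma act_word_delta: "normal_state S \<Longrightarrow> act_word m (delta m) S = shift_delta 1 S"
proof (cases "odd m")
  case True
  assume S: "normal_state S"
  have "y_ord m = 2" using True by (simp add: y_ord_def)
  then have "rmul_y (y_ord m) S = shift_delta 1 (rmul_y_inv (y_ord m) S)"
    using rmul_y_inv_order_2[OF _ S] by simp
  then have "rmul_y (y_ord m) (rmul_y (y_ord m) S) = shift_delta 1 S"
    using S by (simp add: rmul_y_shift rmul_y_rmul_y_inv)
  then show ?thesis using S True by (simp add: delta_def act_word_Delta normal_state_rmul_y)
qed (simp add: delta_def act_word_Delta)

lemma act_word_delta_pow: "normal_state S \<Longrightarrow> act_word m (word_pow (delta m) k) S = shift_delta k S"
proof -
  have inv: "act_word m (inv_word (delta m)) T = shift_delta (-1) T" if T: "normal_state T" for T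
  proof -
    have "act_word m (delta m @ inv_word (delta m)) (shift_delta (-1) T) = shift_delta (-1) T"
      using act_word_artin_eq[OF artin_eq_append_inv_word] T by simp
    then show ?thesis using T by (simp add: act_word_delta)
  qed
  have "act_word m (concat (replicate n (delta m))) T = shift_delta (int n) T"
    and "act_word m (concat (replicate n (inv_word (delta m)))) T = shift_delta (- int n) T"
    if "normal_state T" for T n
    using that by (induction n arbitrary: T) (simp_all add: act_word_delta inv algebra_simps)
  then show "normal_state S \<Longrightarrow> act_word m (word_pow (delta m) k) S = shift_delta k S"
    by (simp add: word_pow_def)
qed

lemma nf_delta_pow_append: "nf m (word_pow (delta m) k @ u) = shift_delta k (nf m u)"
  by (simp add: nf_def act_word_delta_pow normal_state_init act_word_shift[symmetric] del: shift_delta_Pair)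

lemma act_word_Y_pow:
  assumes "normal_state (N, L)" and "y_exp (y_ord m) e" and "\<not> (3 \<le> length L \<and> last L = 0)"
  shows "act_word m (word_pow (Y_word m) e) (N, L) = (N, L @ [e, 0])"
proof (cases "odd m")
  case True
  then have "e = 1" using assms(2) by (auto simp: y_exp_def y_ord_def)
  then show ?thesis using True assms by (simp add: Y_word_def act_word_Delta rmul_y_append del: rmul_y.simps)
next
  case False
  have L: "1 \<le> length L" using assms(1) by (cases L) (auto simp: normal_state_def)
  have p: "y_ord m = 0" and "y_shift m = 0" using False by (simp_all add: y_ord_def y_shift_def)
  then have a1: "act_letter m (False, True) = rmul_y 0" and "act_letter m (False, False) = rmul_y_inv 0"
    by (simp_all add: act_letter_def fun_eq_iff)
  show ?thesis
  proof (cases "0 < e")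
    case True
    then have "word_pow (Y_word m) e = concat (replicate (Suc (nat (e - 1))) [(False, True)])"
      using False by (simp add: Y_word_def word_pow_def Suc_nat_eq_nat_zadd1)
    then show ?thesis using True rmul_y_0_funpow(1)[OF L assms(3)] by (simp only: act_word_replicate a1) simp
  next
    case False
    then have "word_pow (Y_word m) e = concat (replicate (Suc (nat (- e - 1))) [(False, False)])"
      using assms(2) \<open>\<not> odd m\<close> by (simp add: Y_word_def word_pow_def inv_letter_def Suc_nat_eq_nat_zadd1 y_exp_def)
    then show ?thesis
      using False assms(2) rmul_y_0_funpow(2)[OF L assms(3)] \<open>act_letter m (False, False) = rmul_y_inv 0\<close>
      by (simp only: act_word_replicate) (simp add: y_exp_def)
  qed
qed

lemma act_word_X_pow_last:
  assumes "normal_state (N, B @ [0])" and "x_exp (x_ord m) f"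
  shows "act_word m (word_pow X_word f) (N, B @ [0]) = (N, B @ [f])"
proof -
  have "act_word m (word_pow X_word f) (N, B @ [0]) = (rmul_x (x_ord m) ^^ nat f) (N, B @ [0])"
    using assms by (simp add: word_pow_def act_word_X_pow x_exp_def)
  also have "\<dots> = (N, B @ [f])"
    using rmul_x_funpow[OF x_exp_0, of "nat f" N B] assms(2) by (simp add: x_exp_def)
  finally show ?thesis .
qed

lemma nf_syllables_word:
  assumes "normal_list (x_ord m) (y_ord m) L"
  shows "nf m (syllables_word m L) = (0, L)"
proof (rule normal_list_snoc_induct[OF assms])
  fix f assume "x_exp (x_ord m) f"
  then show "nf m (syllables_word m [f]) = (0, [f])"
    using act_word_X_pow_last[of 0 "[]" f] normal_state_init by (simp add: nf_def)
next
  fix L e f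
  assume L: "normal_list (x_ord m) (y_ord m) L" and e: "y_exp (y_ord m) e" and f: "x_exp (x_ord m) f"
    and last: "1 < length L \<longrightarrow> last L \<noteq> 0" and IH: "nf m (syllables_word m L) = (0, L)"
  have "nf m (syllables_word m (L @ [e, f]))
      = act_word m (word_pow X_word f) (act_word m (word_pow (Y_word m) e) (0, L))"
    using syllables_word_snoc[OF normal_list_odd_length[OF L]] IH by (simp add: nf_append)
  also have "\<dots> = act_word m (word_pow X_word f) (0, (L @ [e]) @ [0])"
    using act_word_Y_pow[of 0 L e] L e last by (simp add: normal_state_def)
  also have "\<dots> = (0, L @ [e, f])"
    using act_word_X_pow_last[of 0 "L @ [e]" f] L e f last x_exp_0
    by (simp add: normal_state_def normal_list_snoc)
  finally show "nf m (syllables_word m (L @ [e, f])) = (0, L @ [e, f])" .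
qed

lemma nf_state_word: "normal_state S \<Longrightarrow> nf m (state_word m S) = S"
  by (cases S) (simp add: state_word_def normal_state_def nf_delta_pow_append nf_syllables_word)

lemma normal_state_act_a1_left: "normal_state S \<Longrightarrow> normal_state (act_a1_left m S)"
  by (simp add: act_a1_left_def normal_state_lmul_x_inv_funpow normal_state_lmul_y)

lemma state_word_act_a1_left:
  assumes "normal_state S"
  shows "artin_eq m (state_word m (act_a1_left m S)) ([(False, True)] @ state_word m S)"
proof -
  let ?Xc = "concat (replicate (y_shift m) X_word)"
  have "artin_eq m (state_word m (act_a1_left m S)) (inv_word ?Xc @ state_word m (lmul_y (y_ord m) S))"
    using state_word_funpow_left[OF normal_state_lmul_x_inv state_word_lmul_x_inv normal_state_lmul_y[OF assms]]
    by (simp add: act_a1_left_def inv_word_concat_replicate)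
  also have "artin_eq m (\<dots>) (inv_word ?Xc @ Y_word m @ state_word m S)"
    using artin_eq_append_left[OF state_word_lmul_y[OF assms]] by simp
  also have "artin_eq m (\<dots>) ([(False, True)] @ state_word m S)"
    using artin_eq_cancel_inv_middle[of m "[]" ?Xc] by (simp add: Y_word_eq)
  finally show ?thesis .
qed

lemma nf_Cons_a1: "nf m ((False, True) # w) = act_a1_left m (nf m w)"
proof -
  have "artin_eq m ((False, True) # w) ([(False, True)] @ state_word m (nf m w))"
    using artin_eq_append_left[OF artin_eq_state_word_nf[of w], of "[(False, True)]"] by simp
  also have "artin_eq m (\<dots>) (state_word m (act_a1_left m (nf m w)))"
    by (rule artin_eq.sym[OF state_word_act_a1_left[OF normal_state_nf]])
  finally have "nf m ((False, True) # w) = nf m (state_word m (act_a1_left m (nf m w)))"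
    by (rule nf_artin_eq)
  then show ?thesis by (simp add: nf_state_word normal_state_act_a1_left normal_state_nf)
qed

end

section \<open>Words commuting with a power of \<open>a\<^sub>1\<close>\<close>

definition delta_a1_words :: "nat \<Rightarrow> word set" where
  "delta_a1_words m = {w. \<exists>i j. artin_eq m w (word_pow (delta m) i @ word_pow a1 j)}"

lemma a1_eq: "a1 = [(False, True)]"
  by (simp add: a1_def gen_def)

lemma word_pow_a1_of_nat: "word_pow a1 (int K) = replicate K (False, True)"
  by (simp add: a1_eq)

lemma commutes_a1_pows: "commutes m (word_pow a1 j) (word_pow a1 k)"
proof -
  have "commutes m a1 a1" by (simp add: commutes_def)
  then have "commutes m a1 (word_pow a1 j)" by (rule commutes_word_pow)
  then have "commutes m (word_pow a1 j) a1" by (rule commutes_sym)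
  then show ?thesis by (rule commutes_word_pow)
qed

lemma delta_a1_words_commute_a1_pow:
  assumes "w \<in> delta_a1_words m"
  shows "commutes m w (word_pow a1 l)"
proof -
  obtain i j where w: "artin_eq m w (word_pow (delta m) i @ word_pow a1 j)"
    using assms by (auto simp: delta_a1_words_def)
  have "commutes m (word_pow (delta m) i @ word_pow a1 j) (word_pow a1 l)"
    using commutes_delta_pow commutes_a1_pows by (rule commutes_append_left)
  then show ?thesis using commutes_artin_eq[OF w] by blast
qed

lemma commutes_delta_pow_append_iff:
  "commutes m w (word_pow (delta m) k @ u) \<longleftrightarrow> commutes m w u"
proof
  assume "commutes m w (word_pow (delta m) k @ u)"
  then have "artin_eq m (word_pow (delta m) k @ w @ u) (word_pow (delta m) k @ u @ w)"
    using artin_eq.trans[OF artin_eq.sym[OF artin_eq_move_delta_pow[of m w k u]]]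
    by (simp add: commutes_def)
  then show "commutes m w u" unfolding commutes_def by (rule artin_eq_cancel_left)
next
  assume "commutes m w u"
  then show "commutes m w (word_pow (delta m) k @ u)"
    by (intro commutes_append_right commutes_sym[OF commutes_delta_pow])
qed

context dihedral_artin
begin

lemma nf_append_a1_pow: "nf m (w @ word_pow a1 (int K)) = (act_letter m (False, True) ^^ K) (nf m w)"
  by (simp add: nf_append a1_eq act_word_replicate[simplified])

lemma nf_a1_pow_append: "nf m (word_pow a1 (int K) @ w) = (act_a1_left m ^^ K) (nf m w)"
proof -
  have "nf m (replicate K (False, True) @ w) = (act_a1_left m ^^ K) (nf m w)"
    by (induction K) (simp_all add: nf_Cons_a1)
  then show ?thesis by (simp only: word_pow_a1_of_nat)
qed

lemma same_syllables_imp_artin_eq: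
  assumes "nf m w = (N, L)" and "nf m u = (N', L)"
  shows "artin_eq m w (word_pow (delta m) (N - N') @ u)"
  using assms by (intro nf_eq_imp_artin_eq) (simp add: nf_delta_pow_append)

lemma delta_a1_words_if_syllables:
  assumes "nf m w = (N, L)" and "snd (nf m (word_pow a1 j)) = L"
  shows "w \<in> delta_a1_words m"
proof -
  have "nf m (word_pow a1 j) = (fst (nf m (word_pow a1 j)), L)" using assms(2) by (metis prod.collapse)
  from same_syllables_imp_artin_eq[OF assms(1) this] show ?thesis
    unfolding delta_a1_words_def by blast
qed

lemma delta_a1_words_a1_pow_append:
  assumes "word_pow a1 j @ w \<in> delta_a1_words m"
  shows "w \<in> delta_a1_words m"
proof -
  obtain i k where w: "artin_eq m (word_pow a1 j @ w) (word_pow (delta m) i @ word_pow a1 k)"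
    using assms by (auto simp: delta_a1_words_def)
  have "artin_eq m w (word_pow a1 (- j) @ word_pow a1 j @ w)"
    using artin_eq.sym[OF artin_eq_append_right[OF word_pow_add[of m a1 "- j" j], of w]] by simp
  also have "artin_eq m (\<dots>) (word_pow a1 (- j) @ word_pow (delta m) i @ word_pow a1 k)"
    using w by (rule artin_eq_append_left)
  also have "artin_eq m (\<dots>) (word_pow (delta m) i @ word_pow a1 (- j) @ word_pow a1 k)"
    by (rule artin_eq_move_delta_pow)
  also have "artin_eq m (\<dots>) (word_pow (delta m) i @ word_pow a1 (k - j))"
    using artin_eq_append_left[OF word_pow_add[of m a1 "- j" k]] by simp
  finally show ?thesis unfolding delta_a1_words_def by blast
qed

lemma delta_a1_words_append_a1_pow:
  assumes "w @ word_pow a1 j \<in> delta_a1_words m"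
  shows "w \<in> delta_a1_words m"
proof -
  obtain i k where w: "artin_eq m (w @ word_pow a1 j) (word_pow (delta m) i @ word_pow a1 k)"
    using assms by (auto simp: delta_a1_words_def)
  have "artin_eq m w ((w @ word_pow a1 j) @ word_pow a1 (- j))"
    using artin_eq.sym[OF artin_eq_append_left[OF word_pow_add[of m a1 j "- j"], of w]] by simp
  also have "artin_eq m (\<dots>) ((word_pow (delta m) i @ word_pow a1 k) @ word_pow a1 (- j))"
    using w by (rule artin_eq_append_right)
  also have "artin_eq m (\<dots>) (word_pow (delta m) i @ word_pow a1 (k - j))"
    using artin_eq_append_left[OF word_pow_add[of m a1 k "- j"]] by simp
  finally show ?thesis unfolding delta_a1_words_def by blast
qed

lemma centralizer_a1_pow_by_descent:
  assumes step: "\<And>w. commutes m w (word_pow a1 K) \<Longrightarrow> w \<in> delta_a1_words m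
      \<or> (\<exists>j. length (snd (nf m (word_pow a1 j @ w))) < length (snd (nf m w)))
      \<or> (\<exists>j. length (snd (nf m (w @ word_pow a1 j))) < length (snd (nf m w)))"
  shows "commutes m w (word_pow a1 K) \<Longrightarrow> w \<in> delta_a1_words m"
proof (induction "length (snd (nf m w))" arbitrary: w rule: less_induct)
  case less
  have commutes_left: "commutes m (word_pow a1 j @ w) (word_pow a1 K)" for j
    using commutes_a1_pows less.prems by (rule commutes_append_left)
  have commutes_right: "commutes m (w @ word_pow a1 j) (word_pow a1 K)" for j
    using less.prems commutes_a1_pows by (rule commutes_append_left)
  from step[OF less.prems] show ?case
  proof (elim disjE exE)
    fix j
    assume "length (snd (nf m (word_pow a1 j @ w))) < length (snd (nf m w))"
    then show ?thesis using less.hyps commutes_left delta_a1_words_a1_pow_append by blast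
  next
    fix j
    assume "length (snd (nf m (w @ word_pow a1 j))) < length (snd (nf m w))"
    then show ?thesis using less.hyps commutes_right delta_a1_words_append_a1_pow by blast
  qed
qed

end

context dihedral_artin
begin

context
  assumes even_m: "even m"
begin

lemma Y_word_even: "Y_word m = a1"
  using even_m by (simp add: Y_word_def a1_eq)

lemma nf_a1_pow_Cons_even:
  assumes nf: "nf m w = (N, 0 # e # T)" and T: "normal_list (x_ord m) (y_ord m) T"
  shows "nf m (word_pow a1 (- e) @ w) = (N, T)"
proof -
  let ?D = "word_pow (delta m) N" and ?s = "syllables_word m T"
  have "artin_eq m (word_pow a1 (- e) @ w) (word_pow a1 (- e) @ state_word m (N, 0 # e # T))"
    using artin_eq_append_left[OF artin_eq_state_word_nf[of w]] nf by simp
  also have "artin_eq m (\<dots>) (?D @ word_pow a1 (- e) @ word_pow a1 e @ ?s)"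
    using artin_eq_move_delta_pow by (simp add: Y_word_even)
  also have "artin_eq m (\<dots>) (state_word m (N, T))"
    using artin_eq_append_left[OF artin_eq_append_right[OF word_pow_add[of m a1 "- e" e]], where u = ?D]
    by simp
  finally have "nf m (word_pow a1 (- e) @ w) = nf m (state_word m (N, T))" by (rule nf_artin_eq)
  also have "\<dots> = (N, T)" using T by (intro nf_state_word) (simp add: normal_state_def)
  finally show ?thesis .
qed

lemma nf_append_a1_pow_even:
  assumes nf: "nf m w = (N, B @ [e, 0])" and B: "normal_list (x_ord m) (y_ord m) B"
  shows "nf m (w @ word_pow a1 (- e)) = (N, B)"
proof -
  let ?D = "word_pow (delta m) N" and ?s = "syllables_word m B"
  have "artin_eq m (w @ word_pow a1 (- e)) (state_word m (N, B @ [e, 0]) @ word_pow a1 (- e))"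
    using artin_eq_append_right[OF artin_eq_state_word_nf[of w]] nf by simp
  also have "\<dots> = ?D @ ?s @ word_pow a1 e @ word_pow a1 (- e)"
    using syllables_word_snoc[OF normal_list_odd_length[OF B], of m e 0] by (simp add: Y_word_even)
  also have "artin_eq m (\<dots>) (state_word m (N, B))"
    using artin_eq_append_left[OF word_pow_add[of m a1 e "- e"], where u = "?D @ ?s"] by simp
  finally have "nf m (w @ word_pow a1 (- e)) = nf m (state_word m (N, B))" by (rule nf_artin_eq)
  also have "\<dots> = (N, B)" using B by (intro nf_state_word) (simp add: normal_state_def)
  finally show ?thesis .
qed

lemma delta_a1_words_even_reduced:
  assumes "0 < K" and "commutes m w (word_pow a1 (int K))" and nf: "nf m w = (N, L)"
    and L: "normal_list (x_ord m) (y_ord m) L"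
    and left: "\<not> (3 \<le> length L \<and> hd L = 0)" and right: "\<not> (3 \<le> length L \<and> last L = 0)"
  shows "w \<in> delta_a1_words m"
proof -
  have "y_ord m = 0" and "y_shift m = 0" using even_m by (simp_all add: y_ord_def y_shift_def)
  then have a1_right: "act_letter m (False, True) = rmul_y 0" and a1_left: "act_a1_left m = lmul_y 0"
    by (simp_all add: act_letter_def act_a1_left_def fun_eq_iff)
  obtain K' where K: "K = Suc K'" using assms(1) by (cases K) auto
  have len: "1 \<le> length L" using L by (cases L) auto
  have "nf m (w @ word_pow a1 (int K)) = (N, L @ [int K, 0])"
    unfolding nf_append_a1_pow nf a1_right K using rmul_y_0_funpow(1)[OF len right] by simp
  moreover have "nf m (word_pow a1 (int K) @ w) = (N, 0 # int K # L)"
    unfolding nf_a1_pow_append nf a1_left K using lmul_y_0_funpow[OF len left] by simp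
  moreover have "nf m (w @ word_pow a1 (int K)) = nf m (word_pow a1 (int K) @ w)"
    using assms(2) by (simp add: commutes_def nf_artin_eq)
  ultimately have "L @ [int K, 0] = 0 # int K # L" by simp
  then have "L = [0]" using left len assms(1) by (cases L; cases "tl L") (auto simp: Suc_le_eq)
  then show ?thesis using delta_a1_words_if_syllables[OF nf, of 0] by (simp add: nf_def)
qed

lemma centralizer_a1_pow_even_step:
  assumes "0 < K" and "commutes m w (word_pow a1 (int K))"
  shows "w \<in> delta_a1_words m
    \<or> (\<exists>j. length (snd (nf m (word_pow a1 j @ w))) < length (snd (nf m w)))
    \<or> (\<exists>j. length (snd (nf m (w @ word_pow a1 j))) < length (snd (nf m w)))"
proof -
  obtain N L where nf: "nf m w = (N, L)" and L: "normal_list (x_ord m) (y_ord m) L"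
    using normal_state_nf by (metis normal_stateE)
  consider (left) "3 \<le> length L \<and> hd L = 0" | (right) "3 \<le> length L \<and> last L = 0"
    | (reduced) "\<not> (3 \<le> length L \<and> hd L = 0)" "\<not> (3 \<le> length L \<and> last L = 0)"
    by blast
  then show ?thesis
  proof cases
    case left
    then obtain e T where "L = 0 # e # T" "normal_list (x_ord m) (y_ord m) T"
      using normal_list_y_hdE[OF L] by blast
    then have "length (snd (nf m (word_pow a1 (- e) @ w))) < length (snd (nf m w))"
      using nf_a1_pow_Cons_even nf by simp
    then show ?thesis by blast
  next
    case right
    then obtain B e where "L = B @ [e, 0]" "normal_list (x_ord m) (y_ord m) B"
      using normal_list_y_lastE[OF L] by blast
    then have "length (snd (nf m (w @ word_pow a1 (- e)))) < length (snd (nf m w))"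
      using nf_append_a1_pow_even nf by simp
    then show ?thesis by blast
  qed (use delta_a1_words_even_reduced[OF assms nf L] in blast)
qed

end

end

lemma Cons_concat_replicate_snoc:
  "x # concat (replicate K [y, x]) @ [y, z] = concat (replicate (Suc K) [x, y]) @ [z]"
proof -
  have "x # concat (replicate K [y, x]) @ [y, z] = (x # concat (replicate K [y, x])) @ [y, z]"
    by simp
  also have "\<dots> = (concat (replicate K [x, y]) @ [x, y]) @ [z]"
    by (simp add: Cons_concat_replicate)
  finally show ?thesis by (simp only: concat_replicate_Suc)
qed

lemma concat_replicate_pair_commute:
  assumes "0 < K" and "even (length B)"
    and "concat (replicate K [x, y]) @ B = B @ concat (replicate K [x, y])"
  shows "\<exists>j. B = concat (replicate j [x, y])"
  using assms(2,3)
proof (induction B rule: induct_list012)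
  case 1
  show ?case by (rule exI[of _ 0]) simp
next
  case (3 u v B)
  obtain K' where K: "K = Suc K'" using assms(1) by (cases K) auto
  have eq: "concat (replicate K [x, y]) @ u # v # B = u # v # B @ concat (replicate K [x, y])"
    using "3.prems"(2) by simp
  then have uv: "u = x" "v = y" by (simp_all add: K)
  with eq have "concat (replicate K' [x, y]) @ x # y # B = B @ concat (replicate K [x, y])"
    by (simp add: K)
  moreover have "concat (replicate K' [x, y]) @ x # y # B = concat (replicate K [x, y]) @ B"
    using concat_replicate_Suc[of K' "[x, y]"] by (simp add: K concat_replicate_append_commute)
  ultimately obtain j where "B = concat (replicate j [x, y])"
    using "3.IH"(1) "3.prems"(1) by auto
  then show ?case using uv by (intro exI[of _ "Suc j"]) simp
qed simp

text \<open>For odd \<open>m\<close>, \<open>a\<^sub>1 = x\<^sup>-\<^sup>c y = \<delta>\<^sup>-\<^sup>1 x\<^sup>c\<^sup>+\<^sup>1 y\<close> with \<open>c = y_shift m\<close>, so the syllables of \<open>a\<^sub>1\<^sup>j\<close>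
  repeat the pair \<open>c + 1, 1\<close>.\<close>

definition a1_x_exp :: "nat \<Rightarrow> int" where
  "a1_x_exp m = int (y_shift m) + 1"

context dihedral_artin
begin

context
  assumes odd_m: "odd m"
begin

lemma x_ord_odd: "x_ord m = 2 * int (y_shift m) + 1"
  and y_ord_odd: "y_ord m = 2"
  and y_shift_pos: "1 \<le> y_shift m"
  using odd_m two_le_m by (auto simp: x_ord_def y_ord_def y_shift_def elim!: oddE)

lemma a1_x_exp_pos: "0 < a1_x_exp m"
  and a1_x_exp_less: "a1_x_exp m < x_ord m"
  using y_shift_pos by (simp_all add: a1_x_exp_def x_ord_odd)

lemma minus_y_shift_mod_x_ord: "(- int (y_shift m)) mod x_ord m = a1_x_exp m"
proof -
  have "- int (y_shift m) = x_ord m * (- 1) + a1_x_exp m" by (simp add: x_ord_odd a1_x_exp_def)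
  from int_mod_pos_eq[OF this] show ?thesis using a1_x_exp_pos a1_x_exp_less by simp
qed

lemma y_exp_odd: "y_exp (y_ord m) e \<longleftrightarrow> e = 1"
  by (auto simp: y_exp_def y_ord_odd)

lemma act_letter_a1_odd:
  assumes "x_exp (x_ord m) f"
  shows "act_letter m (False, True) (N, B @ [f])
    = rmul_y 2 (N + (f - int (y_shift m)) div x_ord m, B @ [(f - int (y_shift m)) mod x_ord m])"
  using rmul_x_inv_funpow[OF assms, of "y_shift m" N B] by (simp add: act_letter_def y_ord_odd)

lemma act_letter_a1_odd_long:
  assumes "x_exp (x_ord m) f" and "(f - int (y_shift m)) mod x_ord m \<noteq> 0 \<or> B = []"
  shows "snd (act_letter m (False, True) (N, B @ [f])) = B @ [(f - int (y_shift m)) mod x_ord m, 1, 0]"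
  using assms by (auto simp: act_letter_a1_odd rmul_y_append simp del: rmul_y.simps)

lemma act_letter_a1_odd_short:
  assumes "normal_state (N, B @ [f])" and "(f - int (y_shift m)) mod x_ord m = 0" and "B \<noteq> []"
  shows "length (snd (act_letter m (False, True) (N, B @ [f]))) + 2 = length B + 1"
proof -
  have L: "normal_list (x_ord m) (y_ord m) (B @ [f])" using assms(1) by (simp add: normal_state_def)
  obtain B' e where B: "B = B' @ [e]" using assms(3) by (cases B rule: rev_cases) auto
  then have "normal_list (x_ord m) (y_ord m) B'" "y_exp (y_ord m) e"
    using L normal_list_snoc[of _ _ B' e f] by simp_all
  then have "y_exp (y_ord m) e" "1 \<le> length B'" by (cases B'; simp)+
  then show ?thesis
    using act_letter_a1_odd[OF normal_list_last[OF L], of N B] assms(2) B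
    by (simp add: y_exp_odd rmul_y_merge del: rmul_y.simps)
qed

lemma act_letter_a1_odd_funpow:
  assumes "x_exp (x_ord m) f" and "(f - int (y_shift m)) mod x_ord m \<noteq> 0 \<or> B = []"
  shows "snd ((act_letter m (False, True) ^^ Suc K) (N, B @ [f]))
    = B @ [(f - int (y_shift m)) mod x_ord m] @ concat (replicate K [1, a1_x_exp m]) @ [1, 0]"
proof (induction K)
  case (Suc K)
  let ?B = "B @ [(f - int (y_shift m)) mod x_ord m] @ concat (replicate K [1, a1_x_exp m]) @ [1]"
  have "snd ((act_letter m (False, True) ^^ Suc K) (N, B @ [f])) = ?B @ [0]" using Suc.IH by simp
  then obtain N' where S: "(act_letter m (False, True) ^^ Suc K) (N, B @ [f]) = (N', ?B @ [0])"
    by (metis prod.collapse)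
  have "snd (act_letter m (False, True) (N', ?B @ [0])) = ?B @ [a1_x_exp m, 1, 0]"
    using act_letter_a1_odd_long[OF x_exp_0, of ?B N'] minus_y_shift_mod_x_ord a1_x_exp_pos by simp
  then show ?case using S by (simp add: concat_replicate_append_commute)
qed (use act_letter_a1_odd_long[OF assms] in simp)

lemma act_a1_left_odd_long:
  assumes "f \<noteq> 0 \<or> T = []"
  shows "snd (act_a1_left m (N, f # T)) = a1_x_exp m # 1 # f # T"
  using assms lmul_x_inv_funpow[OF x_exp_0, of "y_shift m" N "1 # f # T"] minus_y_shift_mod_x_ord
  by (auto simp: act_a1_left_def lmul_y_prepend simp del: lmul_y.simps)

lemma act_a1_left_odd_short:
  assumes "normal_state (N, 0 # T)" and "T \<noteq> []"
  shows "length (snd (act_a1_left m (N, 0 # T))) + 2 = length T + 1"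
proof -
  have L: "normal_list (x_ord m) (y_ord m) (0 # T)" using assms(1) by (simp add: normal_state_def)
  then have "3 \<le> length (0 # T) \<and> hd (0 # T) = 0"
    using normal_list_length_ge_3[OF L] assms(2) by simp
  then obtain e T' where "0 # T = 0 # e # T'" "normal_list (x_ord m) (y_ord m) T'" "y_exp (y_ord m) e"
      "1 < length T' \<longrightarrow> hd T' \<noteq> 0" "1 \<le> length T'"
    by (rule normal_list_y_hdE[OF L])
  then have T: "T = e # T'" "normal_list (x_ord m) (y_ord m) T'" "y_exp (y_ord m) e" "1 \<le> length T'"
    by simp_all
  then obtain g T'' where "T' = g # T''" "x_exp (x_ord m) g" by (metis normal_list_ConsE)
  then show ?thesis
    using T T(3)[unfolded y_exp_odd] lmul_x_inv_funpow[of g "y_shift m" "N + 1" T'']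
    by (simp add: act_a1_left_def y_ord_odd lmul_y_merge del: lmul_y.simps)
qed

lemma act_a1_left_odd_funpow:
  assumes "L \<noteq> []" and "hd L \<noteq> 0 \<or> tl L = []"
  shows "snd ((act_a1_left m ^^ K) (N, L)) = concat (replicate K [a1_x_exp m, 1]) @ L"
proof (induction K)
  case (Suc K)
  obtain h T where hT: "concat (replicate K [a1_x_exp m, 1]) @ L = h # T" and "h \<noteq> 0 \<or> T = []"
    using assms a1_x_exp_pos by (cases K; cases L) auto
  moreover obtain N' where "(act_a1_left m ^^ K) (N, L) = (N', h # T)"
    using Suc.IH hT by (metis prod.collapse)
  ultimately show ?case using act_a1_left_odd_long by simp
qed simp

lemma nf_a1_pow_odd: "snd (nf m (word_pow a1 (int j))) = concat (replicate j [a1_x_exp m, 1]) @ [0]"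
  using nf_a1_pow_append[of j "[]"] act_a1_left_odd_funpow[of "[0]" j 0] by (simp add: nf_def)

lemma delta_a1_words_odd_reduced:
  assumes "0 < K" and "commutes m w (word_pow a1 (int K))" and nf: "nf m w = (N, B @ [f])"
    and left: "hd (B @ [f]) \<noteq> 0 \<or> B = []"
    and right: "(f - int (y_shift m)) mod x_ord m \<noteq> 0 \<or> B = []"
  shows "w \<in> delta_a1_words m"
proof -
  let ?a = "a1_x_exp m"
  obtain K' where K: "K = Suc K'" using assms(1) by (cases K) auto
  have L: "normal_list (x_ord m) (y_ord m) (B @ [f])"
    using normal_state_nf[of w] nf by (simp add: normal_state_def)
  have "snd (nf m (w @ word_pow a1 (int K)))
      = B @ [(f - int (y_shift m)) mod x_ord m] @ concat (replicate K' [1, ?a]) @ [1, 0]"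
    unfolding nf_append_a1_pow nf K by (rule act_letter_a1_odd_funpow[OF normal_list_last[OF L] right])
  moreover have "snd (nf m (word_pow a1 (int K) @ w)) = concat (replicate K [?a, 1]) @ B @ [f]"
    unfolding nf_a1_pow_append nf using left by (intro act_a1_left_odd_funpow) auto
  moreover have "nf m (w @ word_pow a1 (int K)) = nf m (word_pow a1 (int K) @ w)"
    using assms(2) by (simp add: commutes_def nf_artin_eq)
  ultimately have eq: "B @ [(f - int (y_shift m)) mod x_ord m] @ concat (replicate K' [1, ?a]) @ [1, 0]
      = concat (replicate K [?a, 1]) @ B @ [f]"
    by simp
  from arg_cong[OF eq, of last] have "f = 0" by simp
  with eq have "B @ concat (replicate K [?a, 1]) @ [0] = concat (replicate K [?a, 1]) @ B @ [0]"
    using Cons_concat_replicate_snoc[of ?a K' 1 0] minus_y_shift_mod_x_ord by (simp add: K)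
  then have "concat (replicate K [?a, 1]) @ B = B @ concat (replicate K [?a, 1])" by simp
  moreover have "even (length B)" using normal_list_odd_length[OF L] by simp
  ultimately obtain j where "B = concat (replicate j [?a, 1])"
    using concat_replicate_pair_commute[OF assms(1)] by metis
  then have "snd (nf m (word_pow a1 (int j))) = B @ [f]" using \<open>f = 0\<close> nf_a1_pow_odd by simp
  then show ?thesis using delta_a1_words_if_syllables[OF nf] by blast
qed

lemma centralizer_a1_pow_odd_step:
  assumes "0 < K" and "commutes m w (word_pow a1 (int K))"
  shows "w \<in> delta_a1_words m
    \<or> (\<exists>j. length (snd (nf m (word_pow a1 j @ w))) < length (snd (nf m w)))
    \<or> (\<exists>j. length (snd (nf m (w @ word_pow a1 j))) < length (snd (nf m w)))"
proof -
  obtain N B f where nf: "nf m w = (N, B @ [f])" using normal_state_nf by (rule normal_state_snocE)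
  consider (left) "hd (B @ [f]) = 0" "B \<noteq> []" | (right) "(f - int (y_shift m)) mod x_ord m = 0" "B \<noteq> []"
    | (reduced) "hd (B @ [f]) \<noteq> 0 \<or> B = []" "(f - int (y_shift m)) mod x_ord m \<noteq> 0 \<or> B = []"
    by blast
  then show ?thesis
  proof cases
    case left
    then obtain T where "B @ [f] = 0 # T" "T \<noteq> []" by (cases B) auto
    then have "length (snd (nf m (word_pow a1 1 @ w))) < length (snd (nf m w))"
      using nf_a1_pow_append[of 1 w] act_a1_left_odd_short[of N T] normal_state_nf[of w] nf by simp
    then show ?thesis by blast
  next
    case right
    then have "length (snd (nf m (w @ word_pow a1 1))) < length (snd (nf m w))"
      using nf_append_a1_pow[of w 1] act_letter_a1_odd_short[of N B f] normal_state_nf[of w] nf by simp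
    then show ?thesis by blast
  qed (use delta_a1_words_odd_reduced[OF assms nf] in blast)
qed

end

end

section \<open>The centralizer and the uniqueness of exponents\<close>

context dihedral_artin
begin

lemma commutes_a1_pow_imp_delta_a1_words:
  assumes "k \<noteq> 0" and "commutes m w (word_pow a1 k)"
  shows "w \<in> delta_a1_words m"
proof -
  define K where "K = nat \<bar>k\<bar>"
  have "commutes m w (word_pow a1 \<bar>k\<bar>)"
    using assms(2) commutes_inv_word[OF assms(2)] by (cases "0 < k") (simp_all add: inv_word_word_pow)
  then have comm: "commutes m w (word_pow a1 (int K))" by (simp add: K_def)
  have K: "0 < K" using assms(1) by (simp add: K_def)
  show ?thesis
    using centralizer_a1_pow_odd_step[OF _ K] centralizer_a1_pow_even_step[OF _ K]
    by (intro centralizer_a1_pow_by_descent[OF _ comm]) (cases "odd m"; blast)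
qed

lemma nf_delta_pow: "nf m (word_pow (delta m) k) = (k, [0])"
  using nf_delta_pow_append[of k "[]"] by (simp add: nf_def)

lemma syllables_nf_a1_pow_nontrivial:
  assumes "0 < d"
  shows "snd (nf m (word_pow a1 d)) \<noteq> [0]"
proof (cases "odd m")
  case True
  have "snd (nf m (word_pow a1 d)) = concat (replicate (nat d) [a1_x_exp m, 1]) @ [0]"
    using nf_a1_pow_odd[OF True, of "nat d"] assms by simp
  moreover obtain n where "nat d = Suc n" using assms by (cases "nat d") auto
  ultimately show ?thesis by simp
next
  case False
  then have "act_a1_left m = lmul_y 0"
    by (simp add: act_a1_left_def y_ord_def y_shift_def fun_eq_iff)
  moreover obtain n where "nat d = Suc n" using assms by (cases "nat d") auto
  moreover have "nf m (word_pow a1 d) = (act_a1_left m ^^ nat d) (0, [0])"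
    using nf_a1_pow_append[of "nat d" "[]"] assms by (simp add: nf_def)
  ultimately show ?thesis using lmul_y_0_funpow[of "[0]" n 0] by simp
qed

lemma a1_pow_artin_eq_delta_pow_imp_zero:
  assumes "artin_eq m (word_pow a1 d) (word_pow (delta m) e)"
  shows "d = 0"
proof (rule ccontr)
  have no: "\<not> artin_eq m (word_pow a1 d') (word_pow (delta m) e')" if "0 < d'" for d' e'
    using syllables_nf_a1_pow_nontrivial[OF that] nf_artin_eq nf_delta_pow by (metis snd_conv)
  assume "d \<noteq> 0"
  then consider "0 < d" | "0 < - d" by linarith
  then show False
  proof cases
    case 1
    then show ?thesis using no assms by blast
  next
    case 2
    then show ?thesis using no[OF 2] artin_eq_inv_word[OF assms] by (simp add: inv_word_word_pow)
  qed
qed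

lemma delta_a1_exponents_unique:
  assumes "artin_eq m (word_pow (delta m) i @ word_pow a1 j) (word_pow (delta m) i' @ word_pow a1 j')"
  shows "i = i' \<and> j = j'"
proof -
  let ?D = "word_pow (delta m)" and ?A = "word_pow a1"
  have "artin_eq m (?A (j - j')) (?D (- i) @ (?D i @ ?A j) @ ?A (- j'))"
    using artin_eq.sym[OF artin_eq_append[OF word_pow_add[of m "delta m" "- i" i] word_pow_add[of m a1 j "- j'"]]]
    by simp
  also have "artin_eq m (\<dots>) (?D (- i) @ (?D i' @ ?A j') @ ?A (- j'))"
    using artin_eq_append_left[OF artin_eq_append_right[OF assms]] by simp
  also have "artin_eq m (\<dots>) (?D (i' - i))"
    using artin_eq_append[OF word_pow_add[of m "delta m" "- i" i'] word_pow_add[of m a1 j' "- j'"]] by simp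
  finally have eq: "artin_eq m (?A (j - j')) (?D (i' - i))" .
  then have "j = j'" using a1_pow_artin_eq_delta_pow_imp_zero by fastforce
  with eq have "nf m [] = nf m (?D (i' - i))" using nf_artin_eq by fastforce
  then show ?thesis using \<open>j = j'\<close> nf_delta_pow by (simp add: nf_def)
qed

end

theorem lemma2p4:
  fixes m :: nat and k1 k2 :: int
  assumes "m \<ge> 2" and "k2 \<noteq> 0"
  shows "centralizer_words m (word_pow (delta m) k1 @ word_pow a1 k2)
           = {w. \<exists>i j :: int. artin_eq m w (word_pow (delta m) i @ word_pow a1 j)}
       \<and> artin_eq m (delta m @ a1) (a1 @ delta m)
       \<and> (\<forall>i j i' j' :: int.
            artin_eq m (word_pow (delta m) i @ word_pow a1 j) (word_pow (delta m) i' @ word_pow a1 j')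
            \<longrightarrow> i = i' \<and> j = j')"
proof -
  interpret dihedral_artin m using assms(1) by unfold_locales
  have "centralizer_words m (word_pow (delta m) k1 @ word_pow a1 k2) = {w. commutes m w (word_pow a1 k2)}"
    unfolding centralizer_words_def commutes_def[symmetric] commutes_delta_pow_append_iff ..
  also have "\<dots> = delta_a1_words m"
    using commutes_a1_pow_imp_delta_a1_words[OF assms(2)] delta_a1_words_commute_a1_pow by blast
  finally have "centralizer_words m (word_pow (delta m) k1 @ word_pow a1 k2) = delta_a1_words m" .
  moreover have "artin_eq m (delta m @ a1) (a1 @ delta m)"
    using commutes_delta[of m a1] by (simp add: commutes_def)
  ultimately show ?thesis using delta_a1_exponents_unique by (simp add: delta_a1_words_def)
qed

end
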